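(* Let $q$ be a prime power, $k\ge 1$ and $n\ge 2k+1$. Let $\mathcal{L}$ be a set of affine $k$-spaces of $\mathrm{AG}(n,q)$ with $|\mathcal{L}|=x\left[{n\atop k}\right]_q$ for a positive integer $x$. Then the following are equivalent: (1) $\mathcal{L}$ is a Cameron-Liebler $k$-set of $\mathrm{AG}(n,q)$; (2) for every $k$-spread $\mathcal{S}$ of $\mathrm{AG}(n,q)$, $|\mathcal{L}\cap\mathcal{S}|=x$; (3) for every pair $\mathcal{R},\mathcal{R}'$ of conjugated switching $k$-sets of $\mathrm{AG}(n,q)$, $|\mathcal{L}\cap\mathcal{R}|=|\mathcal{L}\cap\mathcal{R}'|$. Moreover, if $k=1$, these are also equivalent to: (4) for every affine line $\ell$, the number of elements of $\mathcal{L}$ sharing no affine point with $\ell$ equals $\left(q^2\left[{n-2\atop 1}\right]_q+1\right)(x-\chi_{\mathcal{L}}(\ell))$, and through every point of $\pi_\infty$ there pass exactly $x$ lines of $\mathcal{L}$ (i.e. exactly $x$ lines of $\mathcal{L}$ whose projective closure contains that point).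
   Context: $\mathrm{AG}(n,q)$ is $\mathrm{PG}(n,q)$ with a hyperplane $\pi_\infty$ (hyperplane at infinity) removed; affine points are the points outside $\pi_\infty$, affine $k$-spaces are the $k$-dimensional projective subspaces not contained in $\pi_\infty$ (identified with their affine point sets). $\left[{a\atop b}\right]_q=\frac{(q^a-1)\cdots(q^{a-b+1}-1)}{(q^b-1)\cdots(q-1)}$. With $A_n$ the incidence matrix of affine points versus affine $k$-spaces, a set of affine $k$-spaces is a Cameron-Liebler $k$-set of $\mathrm{AG}(n,q)$ if its characteristic vector lies in the real row space $\mathrm{Im}(A_n^T)$. A partial $k$-spread is a set of affine $k$-spaces pairwise sharing no affine point; a $k$-spread is a partial $k$-spread covering all affine points. A pair of conjugated switching $k$-sets is a pair of disjoint partial $k$-spreads covering the same set of affine points. $\chi_{\mathcal{L}}(\ell)$ is $1$ if $\ell\in\mathcal{L}$ and $0$ otherwise. *)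

theory Defs
  imports Complex_Main "HOL-Library.Cardinality"
begin

text \<open>Model of AG(n,q): the points are the vectors 'n => 'a over a finite field 'a,
  with CARD('n) = n and CARD('a) = q.\<close>

definition aff_span :: "nat \<Rightarrow> ('n \<Rightarrow> 'a::field) \<Rightarrow> (nat \<Rightarrow> 'n \<Rightarrow> 'a) \<Rightarrow> ('n \<Rightarrow> 'a) set" where
  "aff_span k p vs = {x. \<exists>c::nat \<Rightarrow> 'a. x = (\<lambda>i. p i + (\<Sum>j<k. c j * vs j i))}"

definition lin_indep :: "nat \<Rightarrow> (nat \<Rightarrow> 'n \<Rightarrow> 'a::field) \<Rightarrow> bool" where
  "lin_indep k vs \<longleftrightarrow> (\<forall>c::nat \<Rightarrow> 'a. (\<forall>i. (\<Sum>j<k. c j * vs j i) = 0) \<longrightarrow> (\<forall>j<k. c j = 0))"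

definition affine_kspaces :: "nat \<Rightarrow> ('n \<Rightarrow> 'a::field) set set" where
  "affine_kspaces k = {S. \<exists>p vs. lin_indep k vs \<and> S = aff_span k p vs}"

text \<open>Characteristic vector in Im(A^T): chi_L(S) = sum over points P in S of w(P).\<close>
definition cameron_liebler :: "nat \<Rightarrow> ('n \<Rightarrow> 'a::field) set set \<Rightarrow> bool" where
  "cameron_liebler k L \<longleftrightarrow>
     (\<exists>w::('n \<Rightarrow> 'a) \<Rightarrow> real. \<forall>S\<in>affine_kspaces k. (if S \<in> L then 1 else 0) = (\<Sum>P\<in>S. w P))"

definition partial_spread :: "nat \<Rightarrow> ('n \<Rightarrow> 'a::field) set set \<Rightarrow> bool" where
  "partial_spread k R \<longleftrightarrow> R \<subseteq> affine_kspaces k \<and> (\<forall>S\<in>R. \<forall>T\<in>R. S \<noteq> T \<longrightarrow> S \<inter> T = {})"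

definition spread :: "nat \<Rightarrow> ('n \<Rightarrow> 'a::field) set set \<Rightarrow> bool" where
  "spread k R \<longleftrightarrow> partial_spread k R \<and> \<Union>R = UNIV"

definition conj_switching :: "nat \<Rightarrow> ('n \<Rightarrow> 'a::field) set set \<Rightarrow> ('n \<Rightarrow> 'a) set set \<Rightarrow> bool" where
  "conj_switching k R R' \<longleftrightarrow> partial_spread k R \<and> partial_spread k R' \<and> R \<inter> R' = {} \<and> \<Union>R = \<Union>R'"

definition gauss_binom :: "real \<Rightarrow> nat \<Rightarrow> nat \<Rightarrow> real" where
  "gauss_binom q a b = (\<Prod>i<b. q ^ (a - i) - 1) / (\<Prod>i<b. q ^ (i + 1) - 1)"

end

(*
  A Cameron-Liebler k-set L comes with a weight w on the points such that chi_L(S) is the sum of w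
  over S for every affine k-space S. Summing over a partial spread R gives |L /\ R| = sum of w over
  the points covered by R, and double counting k-spaces through a point shows that the total weight
  is x. This gives (1) => (2) and (1) => (3).

  Conversely, (2) and (3) both imply two balance conditions: every parallel class contains the same
  number M of elements of L (a parallel class is a spread, two of them are conjugated switching
  sets), and inside an affine hyperplane H any two parallel classes with directions in the direction
  of H contain equally many elements of L (exchange the part of one class inside H for that of the
  other). Under these conditions a weight is written down explicitly: fix a k-subspace U_D in every
  hyperplane direction D and let F(P) be the sum over D of the number of elements of L with
  direction U_D in the hyperplane P + D, minus M/q. Summed over a k-space S, hyperplane directions
  not containing the direction of S contribute nothing, and double counting hyperplanes through S
  turns the rest into a chi_L(S) + b with a <> 0; so (F - b/q^k)/a is a weight.

  For lines, counting incidences along a line l gives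
  sum_{P in l} deg(P) = |L| - #(lines of L skew to l) + (q - 1) chi_L(l), while for a
  Cameron-Liebler set deg(P) = (r - 1) w(P) + x with r the number of lines through a point; this
  makes the skew-line count of (4) equivalent to (1). The lines through a point at infinity form a
  parallel class.
*)

theory Submission
  imports Defs "HOL-Library.Function_Algebras" "HOL-Library.FuncSet"
begin

section \<open>Linear combinations and spans\<close>

definition scale :: "'a \<Rightarrow> ('n \<Rightarrow> 'a::field) \<Rightarrow> ('n \<Rightarrow> 'a)" where
  "scale a v = (\<lambda>i. a * v i)"

definition lin_comb :: "nat \<Rightarrow> (nat \<Rightarrow> 'a) \<Rightarrow> (nat \<Rightarrow> 'n \<Rightarrow> 'a::field) \<Rightarrow> ('n \<Rightarrow> 'a)" where
  "lin_comb k c vs = (\<lambda>i. \<Sum>j<k. c j * vs j i)"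

definition lin_span :: "nat \<Rightarrow> (nat \<Rightarrow> 'n \<Rightarrow> 'a::field) \<Rightarrow> ('n \<Rightarrow> 'a) set" where
  "lin_span k vs = range (\<lambda>c. lin_comb k c vs)"

definition lin_subspace :: "('n \<Rightarrow> 'a::field) set \<Rightarrow> bool" where
  "lin_subspace W \<longleftrightarrow> 0 \<in> W \<and> (\<forall>x\<in>W. \<forall>y\<in>W. x + y \<in> W) \<and> (\<forall>a. \<forall>x\<in>W. scale a x \<in> W)"

lemma scale_scale: "scale a (scale b x) = scale (a * b) x"
  by (simp add: scale_def fun_eq_iff)

lemma scale_one [simp]: "scale 1 x = x"
  by (simp add: scale_def)

lemma lin_comb_0 [simp]: "lin_comb 0 c vs = 0"
  by (simp add: lin_comb_def fun_eq_iff)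

lemma lin_comb_Suc: "lin_comb (Suc k) c vs = lin_comb k c vs + scale (c k) (vs k)"
  by (simp add: lin_comb_def scale_def fun_eq_iff)

lemma lin_comb_add: "lin_comb k c vs + lin_comb k d vs = lin_comb k (\<lambda>j. c j + d j) vs"
  by (simp add: lin_comb_def fun_eq_iff sum.distrib algebra_simps)

lemma scale_lin_comb: "scale a (lin_comb k c vs) = lin_comb k (\<lambda>j. a * c j) vs"
  by (simp add: lin_comb_def scale_def fun_eq_iff sum_distrib_left algebra_simps)

lemma lin_comb_cong:
  "(\<And>j. j < k \<Longrightarrow> c j = d j) \<Longrightarrow> (\<And>j. j < k \<Longrightarrow> vs j = ws j) \<Longrightarrow> lin_comb k c vs = lin_comb k d ws"
  by (simp add: lin_comb_def fun_eq_iff)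

lemma lin_span_cong: "(\<And>j. j < k \<Longrightarrow> vs j = ws j) \<Longrightarrow> lin_span k vs = lin_span k ws"
  unfolding lin_span_def by (metis (no_types, lifting) lin_comb_cong)

lemma lin_indep_cong: "(\<And>j. j < k \<Longrightarrow> vs j = ws j) \<Longrightarrow> lin_indep k vs = lin_indep k ws"
  unfolding lin_indep_def by simp

lemma lin_indep_iff_lin_comb: "lin_indep k vs \<longleftrightarrow> (\<forall>c. lin_comb k c vs = 0 \<longrightarrow> (\<forall>j<k. c j = 0))"
  unfolding lin_indep_def lin_comb_def by (simp add: fun_eq_iff)

lemma lin_subspace_lin_span: "lin_subspace (lin_span k vs)"
  unfolding lin_subspace_def lin_span_def
proof (intro conjI ballI allI)
  show "0 \<in> range (\<lambda>c. lin_comb k c vs)"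
    by (rule range_eqI[of _ _ "\<lambda>_. 0"]) (simp add: lin_comb_def fun_eq_iff)
next
  fix x y assume "x \<in> range (\<lambda>c. lin_comb k c vs)" "y \<in> range (\<lambda>c. lin_comb k c vs)"
  then show "x + y \<in> range (\<lambda>c. lin_comb k c vs)" by (auto simp: lin_comb_add)
next
  fix a x assume "x \<in> range (\<lambda>c. lin_comb k c vs)"
  then show "scale a x \<in> range (\<lambda>c. lin_comb k c vs)" by (auto simp: scale_lin_comb)
qed

lemma lin_subspace_uminus: "lin_subspace U \<Longrightarrow> x \<in> U \<Longrightarrow> - x \<in> U"
  unfolding lin_subspace_def by (metis (no_types) scale_def fun_eq_iff uminus_apply mult_minus1)

lemma lin_subspace_diff: "lin_subspace U \<Longrightarrow> x \<in> U \<Longrightarrow> y \<in> U \<Longrightarrow> x - y \<in> U"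
  using lin_subspace_uminus[of U y] unfolding lin_subspace_def by (metis diff_conv_add_uminus)

lemma lin_comb_in_subspace:
  "lin_subspace W \<Longrightarrow> (\<And>j. j < k \<Longrightarrow> vs j \<in> W) \<Longrightarrow> lin_comb k c vs \<in> W"
proof (induction k)
  case 0
  then show ?case unfolding lin_subspace_def by (metis lin_comb_0)
next
  case (Suc k)
  then have "lin_comb k c vs \<in> W" by auto
  moreover have "scale (c k) (vs k) \<in> W" using Suc.prems unfolding lin_subspace_def by auto
  ultimately show ?case using Suc.prems(1) unfolding lin_subspace_def lin_comb_Suc by blast
qed

lemma in_lin_span: "j < k \<Longrightarrow> vs j \<in> lin_span k vs"
proof -
  assume j: "j < k"
  have "lin_comb k (\<lambda>i. if i = j then 1 else 0) vs = vs j"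
    using j by (simp add: lin_comb_def fun_eq_iff if_distrib[where f="\<lambda>a. a * b" for b] cong: if_cong)
  then show ?thesis unfolding lin_span_def by (metis rangeI)
qed

lemma lin_span_subset_iff: "lin_subspace W \<Longrightarrow> lin_span k vs \<subseteq> W \<longleftrightarrow> (\<forall>j<k. vs j \<in> W)"
  unfolding lin_span_def using lin_comb_in_subspace[of W k vs] in_lin_span[of _ k vs]
  by (auto simp: lin_span_def)

lemma lin_comb_inj: "lin_indep k vs \<Longrightarrow> lin_comb k c vs = lin_comb k d vs \<Longrightarrow> j < k \<Longrightarrow> c j = d j"
proof -
  assume li: "lin_indep k vs" and e: "lin_comb k c vs = lin_comb k d vs" and j: "j < k"
  have "lin_comb k (\<lambda>j. c j + (- 1) * d j) vs = 0"
    using e by (simp add: lin_comb_def fun_eq_iff algebra_simps sum_subtractf)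
  then show ?thesis using li j unfolding lin_indep_iff_lin_comb by fastforce
qed

lemma lin_span_eq_image: "lin_span k vs = (\<lambda>c. lin_comb k c vs) ` (PiE {..<k} (\<lambda>_. UNIV))"
proof
  show "lin_span k vs \<subseteq> (\<lambda>c. lin_comb k c vs) ` (PiE {..<k} (\<lambda>_. UNIV))"
  proof
    fix x assume "x \<in> lin_span k vs"
    then obtain c where x: "x = lin_comb k c vs" by (auto simp: lin_span_def)
    have "lin_comb k c vs = lin_comb k (restrict c {..<k}) vs" by (rule lin_comb_cong) auto
    moreover have "restrict c {..<k} \<in> PiE {..<k} (\<lambda>_. UNIV)" by auto
    ultimately show "x \<in> (\<lambda>c. lin_comb k c vs) ` (PiE {..<k} (\<lambda>_. UNIV))" using x by blast
  qed
qed (auto simp: lin_span_def)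

lemma card_lin_span:
  fixes vs :: "nat \<Rightarrow> 'n \<Rightarrow> 'a::{field,finite}"
  assumes li: "lin_indep k vs"
  shows "card (lin_span k vs) = CARD('a) ^ k"
proof -
  have "inj_on (\<lambda>c. lin_comb k c vs) (PiE {..<k} (\<lambda>_. UNIV::'a set))"
  proof (rule inj_onI)
    fix c d assume c: "c \<in> PiE {..<k} (\<lambda>_. UNIV::'a set)" and d: "d \<in> PiE {..<k} (\<lambda>_. UNIV::'a set)"
      and e: "lin_comb k c vs = lin_comb k d vs"
    show "c = d"
    proof
      fix j show "c j = d j"
      proof (cases "j < k")
        case True then show ?thesis using lin_comb_inj[OF li e] by blast
      next
        case False then show ?thesis using c d by (auto simp: PiE_def extensional_def)
      qed
    qed
  qed
  then have "card (lin_span k vs) = card (PiE {..<k} (\<lambda>_. UNIV::'a set))"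
    by (simp add: lin_span_eq_image card_image)
  also have "\<dots> = CARD('a) ^ k" by (simp add: card_PiE)
  finally show ?thesis .
qed

lemma lin_indep_SucD:
  assumes li: "lin_indep (Suc k) vs"
  shows "lin_indep k vs" and "vs k \<notin> lin_span k vs"
proof -
  show "lin_indep k vs"
    unfolding lin_indep_iff_lin_comb
  proof (rule allI, rule impI)
    fix c assume "lin_comb k c vs = 0"
    moreover have "lin_comb k (c(k := 0)) vs = lin_comb k c vs" by (rule lin_comb_cong) auto
    ultimately have "lin_comb (Suc k) (c(k := 0)) vs = 0"
      by (simp add: lin_comb_Suc scale_def zero_fun_def)
    then show "\<forall>j<k. c j = 0" using li unfolding lin_indep_iff_lin_comb
      by (metis fun_upd_apply less_Suc_eq nat_neq_iff)
  qed
  show "vs k \<notin> lin_span k vs"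
  proof
    assume "vs k \<in> lin_span k vs"
    then obtain c where c: "vs k = lin_comb k c vs" by (auto simp: lin_span_def)
    have "lin_comb k (c(k := -1)) vs = lin_comb k c vs" by (rule lin_comb_cong) auto
    then have "lin_comb (Suc k) (c(k := -1)) vs = lin_comb k c vs + scale (-1) (vs k)"
      by (simp add: lin_comb_Suc)
    also have "\<dots> = 0" using c by (simp add: scale_def fun_eq_iff)
    finally have "(c(k := -1)) k = 0" using li unfolding lin_indep_iff_lin_comb by blast
    then show False by simp
  qed
qed

lemma lin_indep_SucI:
  assumes li: "lin_indep k vs" and notin: "vs k \<notin> lin_span k vs"
  shows "lin_indep (Suc k) vs"
  unfolding lin_indep_iff_lin_comb
proof (rule allI, rule impI)
  fix c assume e: "lin_comb (Suc k) c vs = 0"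
  have ck: "c k = 0"
  proof (rule ccontr)
    assume nz: "c k \<noteq> 0"
    have "vs k = scale (- 1 / c k) (lin_comb k c vs)"
    proof
      fix i
      have "lin_comb k c vs i + c k * vs k i = 0"
        using fun_cong[OF e, of i] by (simp add: lin_comb_Suc scale_def)
      then show "vs k i = scale (- 1 / c k) (lin_comb k c vs) i"
        using nz by (simp add: scale_def field_simps add_eq_0_iff2)
    qed
    then have "vs k = lin_comb k (\<lambda>j. (- 1 / c k) * c j) vs" by (simp add: scale_lin_comb)
    then show False using notin by (auto simp: lin_span_def)
  qed
  then have "lin_comb k c vs = 0" using e by (simp add: lin_comb_Suc scale_def zero_fun_def)
  then have "\<forall>j<k. c j = 0" using li unfolding lin_indep_iff_lin_comb by blast
  then show "\<forall>j<Suc k. c j = 0" using ck less_Suc_eq by auto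
qed

lemma lin_indep_Suc: "lin_indep (Suc k) vs \<longleftrightarrow> lin_indep k vs \<and> vs k \<notin> lin_span k vs"
  using lin_indep_SucD lin_indep_SucI by blast

lemma lin_indep_mono: "lin_indep l vs \<Longrightarrow> j \<le> l \<Longrightarrow> lin_indep j vs"
proof (induction l)
  case 0 then show ?case by simp
next
  case (Suc l) then show ?case using lin_indep_Suc le_Suc_eq by blast
qed

lemma lin_indep_single: "lin_indep 1 (\<lambda>_. v) \<longleftrightarrow> v \<noteq> 0"
proof
  assume li: "lin_indep 1 (\<lambda>_. v)"
  show "v \<noteq> 0"
  proof
    assume "v = 0"
    then have "lin_comb 1 (\<lambda>_. 1) (\<lambda>_. v) = 0" by (simp add: lin_comb_def fun_eq_iff)
    then show False using li unfolding lin_indep_iff_lin_comb by auto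
  qed
next
  assume "v \<noteq> 0"
  then obtain i where i: "v i \<noteq> 0" by (auto simp: fun_eq_iff)
  show "lin_indep 1 (\<lambda>_. v)" unfolding lin_indep_iff_lin_comb
  proof (intro allI impI)
    fix c and j :: nat assume c: "lin_comb 1 c (\<lambda>_. v) = 0" and j: "j < 1"
    have "c 0 * v i = 0" using fun_cong[OF c, of i] by (simp add: lin_comb_def)
    then show "c j = 0" using i j by simp
  qed
qed


section \<open>Counting subspaces\<close>

definition subspaces :: "nat \<Rightarrow> ('n \<Rightarrow> 'a::field) set set" where
  "subspaces k = {lin_span k vs | vs. lin_indep k vs}"

abbreviation hyperplane_dirs :: "('n::finite \<Rightarrow> 'a::field) set set" where
  "hyperplane_dirs \<equiv> subspaces (CARD('n) - 1)"

definition indep_extensions ::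
    "('n \<Rightarrow> 'a::field) set \<Rightarrow> (nat \<Rightarrow> 'n \<Rightarrow> 'a) \<Rightarrow> nat \<Rightarrow> nat \<Rightarrow> (nat \<Rightarrow> 'n \<Rightarrow> 'a) set" where
  "indep_extensions W b j l = {vs \<in> PiE {..<l} (\<lambda>_. W). lin_indep l vs \<and> (\<forall>i<j. vs i = b i)}"

lemma indep_extensions_self:
  "lin_indep j b \<Longrightarrow> (\<And>i. i < j \<Longrightarrow> b i \<in> W) \<Longrightarrow> indep_extensions W b j j = {restrict b {..<j}}"
proof -
  assume li: "lin_indep j b" and bW: "\<And>i. i < j \<Longrightarrow> b i \<in> W"
  have "restrict b {..<j} \<in> indep_extensions W b j j"
    unfolding indep_extensions_def using bW lin_indep_cong[of j "restrict b {..<j}" b] li by auto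
  moreover have "vs = restrict b {..<j}" if "vs \<in> indep_extensions W b j j" for vs
    using that unfolding indep_extensions_def by (auto simp: PiE_def extensional_def fun_eq_iff)
  ultimately show ?thesis by blast
qed

lemma indep_extensions_Suc:
  assumes "j \<le> l"
  shows "indep_extensions W b j (Suc l)
       = (\<lambda>(vs, v). vs(l := v)) ` (SIGMA vs:indep_extensions W b j l. W - lin_span l vs)"
proof
  show "indep_extensions W b j (Suc l)
      \<subseteq> (\<lambda>(vs, v). vs(l := v)) ` (SIGMA vs:indep_extensions W b j l. W - lin_span l vs)"
  proof
    fix ws assume ws: "ws \<in> indep_extensions W b j (Suc l)"
    define vs where "vs = restrict ws {..<l}"
    have e: "ws = vs(l := ws l)"
      using ws unfolding vs_def indep_extensions_def by (auto simp: PiE_def extensional_def fun_eq_iff)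
    have li: "lin_indep (Suc l) ws" using ws by (simp add: indep_extensions_def)
    have c1: "lin_indep l vs = lin_indep l ws" by (rule lin_indep_cong) (simp add: vs_def)
    have c2: "lin_span l vs = lin_span l ws" by (rule lin_span_cong) (simp add: vs_def)
    have "vs \<in> indep_extensions W b j l"
      using ws c1 li lin_indep_Suc assms unfolding indep_extensions_def vs_def by (auto simp: PiE_def)
    moreover have "ws l \<in> W - lin_span l vs"
      using ws li c2 lin_indep_Suc unfolding indep_extensions_def by auto
    ultimately show "ws \<in> (\<lambda>(vs, v). vs(l := v)) ` (SIGMA vs:indep_extensions W b j l. W - lin_span l vs)"
      using e by (intro image_eqI[of _ _ "(vs, ws l)"]) auto
  qed
next
  show "(\<lambda>(vs, v). vs(l := v)) ` (SIGMA vs:indep_extensions W b j l. W - lin_span l vs)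
      \<subseteq> indep_extensions W b j (Suc l)"
  proof clarify
    fix vs v assume vs: "vs \<in> indep_extensions W b j l" and v: "v \<in> W" "v \<notin> lin_span l vs"
    have c1: "lin_indep l (vs(l := v)) = lin_indep l vs" by (rule lin_indep_cong) simp
    have c2: "lin_span l (vs(l := v)) = lin_span l vs" by (rule lin_span_cong) simp
    have "lin_indep l vs" using vs unfolding indep_extensions_def by auto
    then have "lin_indep (Suc l) (vs(l := v))"
      using c1 c2 v lin_indep_Suc[of l "vs(l := v)"] by simp
    then show "vs(l := v) \<in> indep_extensions W b j (Suc l)"
      using vs v assms unfolding indep_extensions_def
      by (auto simp: PiE_def extensional_def Pi_iff less_Suc_eq)
  qed
qed

lemma inj_on_extend_tuple:
  "inj_on (\<lambda>(vs, v). vs(l := v)) (SIGMA vs:indep_extensions W b j l. X vs)"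
proof (rule inj_onI, clarify)
  fix vs v vs' v'
  assume a: "vs \<in> indep_extensions W b j l" "vs' \<in> indep_extensions W b j l"
    and e: "vs(l := v) = vs'(l := v')"
  have "v = v'" using fun_cong[OF e, of l] by simp
  moreover have "vs = vs'"
  proof
    fix i show "vs i = vs' i"
    proof (cases "i = l")
      case True
      then show ?thesis using a unfolding indep_extensions_def by (auto simp: PiE_def extensional_def)
    next
      case False
      then show ?thesis using fun_cong[OF e, of i] by simp
    qed
  qed
  ultimately show "vs = vs' \<and> v = v'" by simp
qed

lemma finite_indep_extensions [simp]:
  fixes W :: "('n::finite \<Rightarrow> 'a::{field,finite}) set"
  shows "finite (indep_extensions W b j l)"
  by (rule finite_subset[of _ "PiE {..<l} (\<lambda>_. W)"])
    (auto simp: indep_extensions_def intro!: finite_PiE)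

lemma card_indep_extensions:
  fixes W :: "('n::finite \<Rightarrow> 'a::{field,finite}) set"
  assumes W: "lin_subspace W" "card W = CARD('a) ^ m"
    and b: "lin_indep j b" "\<And>i. i < j \<Longrightarrow> b i \<in> W"
    and "j \<le> l" "l \<le> m"
  shows "card (indep_extensions W b j l) = (\<Prod>i\<in>{j..<l}. CARD('a) ^ m - CARD('a) ^ i)"
  using \<open>j \<le> l\<close> \<open>l \<le> m\<close>
proof (induction l rule: dec_induct)
  case base
  then show ?case using indep_extensions_self[OF b] by simp
next
  case (step l)
  let ?E = "indep_extensions W b j l"
  have "card (indep_extensions W b j (Suc l))
      = card ((\<lambda>(vs, v). vs(l := v)) ` (SIGMA vs:?E. W - lin_span l vs))"
    by (simp only: indep_extensions_Suc[OF step.hyps(1)])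
  also have "\<dots> = (\<Sum>vs\<in>?E. card (W - lin_span l vs))"
    by (simp add: card_image[OF inj_on_extend_tuple] card_SigmaI)
  also have "\<dots> = (\<Sum>vs\<in>?E. CARD('a) ^ m - CARD('a) ^ l)"
  proof (rule sum.cong)
    fix vs assume vs: "vs \<in> ?E"
    then have "lin_span l vs \<subseteq> W"
      using lin_span_subset_iff[OF W(1)] unfolding indep_extensions_def by (auto simp: PiE_def)
    then show "card (W - lin_span l vs) = CARD('a) ^ m - CARD('a) ^ l"
      using vs W(2) card_lin_span[of l vs] unfolding indep_extensions_def
      by (simp add: card_Diff_subset)
  qed simp
  also have "\<dots> = (\<Prod>i\<in>{j..<Suc l}. CARD('a) ^ m - CARD('a) ^ i)"
    using step by (simp add: prod.op_ivl_Suc)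
  finally show ?case .
qed

lemma lin_subspace_of_subspaces: "D \<in> subspaces l \<Longrightarrow> lin_subspace D"
  by (auto simp: subspaces_def lin_subspace_lin_span)

lemma card_of_subspaces: "D \<in> subspaces l \<Longrightarrow> card D = CARD('a) ^ l"
  for D :: "('n \<Rightarrow> 'a::{field,finite}) set"
  by (auto simp: subspaces_def card_lin_span)

lemma lin_span_in_subspaces: "lin_indep l vs \<Longrightarrow> lin_span l vs \<in> subspaces l"
  by (auto simp: subspaces_def)

lemma subspaces_eq_of_subset:
  fixes D E :: "('n::finite \<Rightarrow> 'a::{field,finite}) set"
  assumes "D \<in> subspaces l" "E \<in> subspaces l" "E \<subseteq> D"
  shows "E = D"
  using assms card_of_subspaces[of D l] card_of_subspaces[of E l] by (simp add: card_subset_eq)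

lemma lin_span_eq_subspace:
  fixes D :: "('n::finite \<Rightarrow> 'a::{field,finite}) set"
  assumes "D \<in> subspaces l" "lin_indep l vs" "\<And>i. i < l \<Longrightarrow> vs i \<in> D"
  shows "lin_span l vs = D"
  by (rule subspaces_eq_of_subset[OF assms(1) lin_span_in_subspaces[OF assms(2)]])
    (use assms lin_span_subset_iff[OF lin_subspace_of_subspaces[OF assms(1)]] in blast)

lemma card_subspaces_containing:
  fixes b :: "nat \<Rightarrow> 'n::finite \<Rightarrow> 'a::{field,finite}"
  assumes b: "lin_indep j b" and jl: "j \<le> l" and ln: "l \<le> CARD('n)"
  shows "card {D \<in> subspaces l. \<forall>i<j. b i \<in> D} * (\<Prod>i\<in>{j..<l}. CARD('a) ^ l - CARD('a) ^ i)
         = (\<Prod>i\<in>{j..<l}. CARD('a) ^ CARD('n) - CARD('a) ^ i)"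
proof -
  let ?S = "{D \<in> subspaces l. \<forall>i<j. b i \<in> D} :: ('n \<Rightarrow> 'a) set set"
  let ?E = "indep_extensions UNIV b j l"
  have cE: "card ?E = (\<Prod>i\<in>{j..<l}. CARD('a) ^ CARD('n) - CARD('a) ^ i)"
    by (rule card_indep_extensions[OF _ _ b _ jl ln]) (simp_all add: lin_subspace_def card_fun)
  have fibre: "{vs \<in> ?E. lin_span l vs = D} = indep_extensions D b j l" if D: "D \<in> ?S" for D
  proof
    show "{vs \<in> ?E. lin_span l vs = D} \<subseteq> indep_extensions D b j l"
      using in_lin_span unfolding indep_extensions_def by (auto simp: PiE_def)
    show "indep_extensions D b j l \<subseteq> {vs \<in> ?E. lin_span l vs = D}"
      using lin_span_eq_subspace[of D l] D unfolding indep_extensions_def by (auto simp: PiE_def)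
  qed
  have "lin_span l vs \<in> ?S" if vs: "vs \<in> ?E" for vs
  proof -
    have "b i \<in> lin_span l vs" if "i < j" for i
      using that vs jl in_lin_span[of i l vs] unfolding indep_extensions_def by auto
    then show ?thesis using vs lin_span_in_subspaces[of l vs] unfolding indep_extensions_def by auto
  qed
  then have partition: "?E = (\<Union>D\<in>?S. {vs \<in> ?E. lin_span l vs = D})" by blast
  have "card ?E = (\<Sum>D\<in>?S. card {vs \<in> ?E. lin_span l vs = D})"
    by (subst partition, rule card_UN_disjoint) auto
  also have "\<dots> = (\<Sum>D\<in>?S. card (indep_extensions D b j l))" by (rule sum.cong) (auto simp: fibre)
  also have "\<dots> = (\<Sum>D\<in>?S. (\<Prod>i\<in>{j..<l}. CARD('a) ^ l - CARD('a) ^ i))"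
    by (intro sum.cong card_indep_extensions[OF lin_subspace_of_subspaces card_of_subspaces b _ jl])
      auto
  finally show ?thesis using cE by simp
qed

lemma card_field_ge_2: "CARD('a::{field,finite}) \<ge> 2"
proof -
  have "card {0::'a, 1} \<le> CARD('a)" by (rule card_mono) simp_all
  then show ?thesis by simp
qed

lemma of_nat_prod_pow_diff:
  fixes q :: nat
  assumes "q > 0" "\<And>i. i \<in> I \<Longrightarrow> i \<le> m"
  shows "real (\<Prod>i\<in>I. q ^ m - q ^ i) = (\<Prod>i\<in>I. real q ^ m - real q ^ i)"
  using assms by (simp add: of_nat_diff power_increasing)

lemma prod_pow_diff_factor:
  fixes Q :: real
  assumes "k \<le> m"
  shows "(\<Prod>i<k. Q ^ m - Q ^ i) = (\<Prod>i<k. Q ^ i) * (\<Prod>i<k. Q ^ (m - i) - 1)"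
proof -
  have "Q ^ m - Q ^ i = Q ^ i * (Q ^ (m - i) - 1)" if "i < k" for i
  proof -
    have "Q ^ m = Q ^ i * Q ^ (m - i)" using that assms by (simp flip: power_add)
    then show ?thesis by (simp add: algebra_simps)
  qed
  then show ?thesis by (simp add: prod.distrib)
qed

lemma card_subspaces_mult:
  assumes "k \<le> CARD('n)"
  shows "card (subspaces k :: ('n::finite \<Rightarrow> 'a::{field,finite}) set set)
           * (\<Prod>i<k. CARD('a) ^ k - CARD('a) ^ i)
         = (\<Prod>i<k. CARD('a) ^ CARD('n) - CARD('a) ^ i)"
  using card_subspaces_containing[where 'n='n and 'a='a, of 0 "\<lambda>_. 0" k] assms
  by (simp add: lin_indep_def atLeast0LessThan)

lemma card_subspaces_pos:
  assumes "k \<le> CARD('n)"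
  shows "card (subspaces k :: ('n::finite \<Rightarrow> 'a::{field,finite}) set set) > 0"
proof -
  have "CARD('a) ^ i < CARD('a) ^ CARD('n)" if "i < k" for i
    using that assms card_field_ge_2[where 'a='a] by (intro power_strict_increasing) auto
  then have "(\<Prod>i<k. CARD('a) ^ CARD('n) - CARD('a) ^ i) \<noteq> 0" by (simp add: not_le)
  then show ?thesis using card_subspaces_mult[OF assms, where 'a='a] by (metis gr0I mult_is_0)
qed

lemma card_subspaces:
  assumes "k \<le> CARD('n)"
  shows "real (card (subspaces k :: ('n::finite \<Rightarrow> 'a::{field,finite}) set set))
         = gauss_binom (real CARD('a)) CARD('n) k"
proof -
  define Q where "Q = real CARD('a)"
  have Q2: "Q \<ge> 2" using card_field_ge_2[where 'a='a] unfolding Q_def by simp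
  have "real (\<Prod>i<k. CARD('a) ^ m - CARD('a) ^ i) = (\<Prod>i<k. Q ^ m - Q ^ i)" if "k \<le> m" for m
    unfolding Q_def using that by (intro of_nat_prod_pow_diff) auto
  then have "real (card (subspaces k :: ('n \<Rightarrow> 'a) set set)) * (\<Prod>i<k. Q ^ k - Q ^ i)
      = (\<Prod>i<k. Q ^ CARD('n) - Q ^ i)"
    using arg_cong[where f=real, OF card_subspaces_mult[OF assms, where 'a='a]] assms
    by (metis order_refl of_nat_mult)
  moreover have "(\<Prod>i<k. Q ^ (k - i) - 1) = (\<Prod>i<k. Q ^ (i + 1) - 1)"
    using prod.nat_diff_reindex[of "\<lambda>i. Q ^ (i + 1) - 1" k]
    by (metis (no_types, lifting) Suc_diff_Suc Suc_eq_plus1 lessThan_iff prod.cong)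
  moreover have "(\<Prod>i<k. Q ^ i) \<noteq> 0" using Q2 by simp
  moreover have "Q ^ (i + 1) - 1 \<noteq> 0" for i
    using Q2 self_le_power[of Q "i + 1"] by linarith
  ultimately show ?thesis
    unfolding gauss_binom_def Q_def[symmetric]
    using prod_pow_diff_factor[of k k Q] prod_pow_diff_factor[OF assms, of Q]
    by (simp add: field_simps)
qed

text \<open>The number of hyperplanes through a j-dimensional subspace: independent extensions of a basis
  of it to n - 1 vectors, divided by those lying in one fixed such hyperplane.\<close>

definition hyperplane_count :: "real \<Rightarrow> nat \<Rightarrow> nat \<Rightarrow> real" where
  "hyperplane_count Q N j
     = (\<Prod>i\<in>{j..<N - 1}. Q ^ N - Q ^ i) / (\<Prod>i\<in>{j..<N - 1}. Q ^ (N - 1) - Q ^ i)"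

lemma card_hyperplanes_containing:
  fixes U :: "('n::finite \<Rightarrow> 'a::{field,finite}) set"
  assumes U: "U \<in> subspaces j" and j: "j \<le> CARD('n) - 1"
  shows "real (card {D \<in> hyperplane_dirs. U \<subseteq> D}) = hyperplane_count (real CARD('a)) CARD('n) j"
proof -
  let ?I = "{j..<CARD('n) - 1}"
  obtain b where b: "lin_indep j b" "U = lin_span j b" using U by (auto simp: subspaces_def)
  then have "{D \<in> hyperplane_dirs. U \<subseteq> D} = {D \<in> hyperplane_dirs. \<forall>i<j. b i \<in> D}"
    using lin_span_subset_iff lin_subspace_of_subspaces by blast
  moreover have "(\<Prod>i\<in>?I. real CARD('a) ^ (CARD('n) - 1) - real CARD('a) ^ i) \<noteq> 0"
    using card_field_ge_2[where 'a='a] by (auto intro!: power_strict_increasing dest: less_imp_neq)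
  moreover have "real (\<Prod>i\<in>?I. CARD('a) ^ m - CARD('a) ^ i)
      = (\<Prod>i\<in>?I. real CARD('a) ^ m - real CARD('a) ^ i)" if "CARD('n) - 1 \<le> m" for m
    using that by (intro of_nat_prod_pow_diff) auto
  ultimately show ?thesis
    using arg_cong[where f=real, OF card_subspaces_containing[OF b(1) j]]
    unfolding hyperplane_count_def by (simp add: field_simps)
qed

lemma hyperplane_count_Suc_neq:
  assumes Q: "Q \<ge> 2" and j: "j + 1 \<le> N - 1"
  shows "hyperplane_count Q N j \<noteq> hyperplane_count Q N (j + 1)"
proof
  assume e: "hyperplane_count Q N j = hyperplane_count Q N (j + 1)"
  define A where "A = (\<Prod>i\<in>{Suc j..<N - 1}. Q ^ N - Q ^ i)"
  define B where "B = (\<Prod>i\<in>{Suc j..<N - 1}. Q ^ (N - 1) - Q ^ i)"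
  have pow_less: "Q ^ i < Q ^ m" if "i < m" for i m using that Q by (intro power_strict_increasing) auto
  have "Q ^ N - Q ^ i \<noteq> 0" "Q ^ (N - 1) - Q ^ i \<noteq> 0" if "i \<in> {Suc j..<N - 1}" for i
  proof -
    have "i < N - 1" "i < N" using that by auto
    then show "Q ^ N - Q ^ i \<noteq> 0" "Q ^ (N - 1) - Q ^ i \<noteq> 0"
      using pow_less[of i N] pow_less[of i "N - 1"] by auto
  qed
  then have A: "A \<noteq> 0" and B: "B \<noteq> 0" unfolding A_def B_def by simp_all
  have C: "Q ^ (N - 1) - Q ^ j \<noteq> 0" using pow_less[of j "N - 1"] j by simp
  have "hyperplane_count Q N j = (A * (Q ^ N - Q ^ j)) / (B * (Q ^ (N - 1) - Q ^ j))"
    unfolding hyperplane_count_def A_def B_def using j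
    by (simp add: prod.atLeast_Suc_lessThan mult.commute)
  moreover have "hyperplane_count Q N (j + 1) = A / B" unfolding hyperplane_count_def A_def B_def by simp
  ultimately have "A * B * (Q ^ N - Q ^ j) = A * B * (Q ^ (N - 1) - Q ^ j)"
    using e A B C by (simp add: field_simps)
  then have "Q ^ N = Q ^ (N - 1)" using A B by simp
  then show False using pow_less[of "N - 1" N] j by simp
qed


section \<open>Affine subspaces and parallel classes\<close>

definition translate :: "('n \<Rightarrow> 'a::field) \<Rightarrow> ('n \<Rightarrow> 'a) set \<Rightarrow> ('n \<Rightarrow> 'a) set" where
  "translate p U = (\<lambda>u. p + u) ` U"

definition direction :: "('n \<Rightarrow> 'a::field) set \<Rightarrow> ('n \<Rightarrow> 'a) set" where
  "direction S = {a - b | a b. a \<in> S \<and> b \<in> S}"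

definition parallel_class :: "('n \<Rightarrow> 'a::field) set \<Rightarrow> ('n \<Rightarrow> 'a) set set" where
  "parallel_class U = range (\<lambda>p. translate p U)"

lemma mem_translate: "v \<in> translate p U \<longleftrightarrow> v - p \<in> U"
  unfolding translate_def by (auto intro: image_eqI[of _ _ "v - p"])

lemma aff_span_eq_translate: "aff_span k p vs = translate p (lin_span k vs)"
  unfolding aff_span_def translate_def lin_span_def lin_comb_def by (auto simp: plus_fun_def)

lemma affine_kspaces_eq: "affine_kspaces k = {translate p U | p U. U \<in> subspaces k}"
  unfolding affine_kspaces_def subspaces_def by (auto simp: aff_span_eq_translate)

lemma translate_in_affine_kspaces: "U \<in> subspaces k \<Longrightarrow> translate p U \<in> affine_kspaces k"
  by (auto simp: affine_kspaces_eq)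

lemma in_translate_self: "lin_subspace U \<Longrightarrow> p \<in> translate p U"
  by (simp add: mem_translate lin_subspace_def)

lemma translate_mono: "U \<subseteq> D \<Longrightarrow> translate p U \<subseteq> translate p D"
  unfolding translate_def by blast

lemma card_translate: "card (translate p U) = card U"
  unfolding translate_def by (rule card_image) (simp add: inj_on_def)

lemma translate_eq: "lin_subspace U \<Longrightarrow> s \<in> translate p U \<Longrightarrow> translate s U = translate p U"
proof -
  assume U: "lin_subspace U" and s: "s \<in> translate p U"
  have sp: "s - p \<in> U" using s by (simp add: mem_translate)
  have "v - s \<in> U \<longleftrightarrow> v - p \<in> U" for v
  proof -
    have "v - p = (v - s) + (s - p)" "v - s = (v - p) - (s - p)" by simp_all
    then show ?thesis using sp U lin_subspace_diff[OF U] unfolding lin_subspace_def by metis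
  qed
  then show ?thesis by (auto simp: mem_translate)
qed

lemma translate_disjoint_or_eq:
  "lin_subspace U \<Longrightarrow> translate p U \<inter> translate p' U \<noteq> {} \<Longrightarrow> translate p U = translate p' U"
  using translate_eq by blast

lemma direction_translate: "lin_subspace U \<Longrightarrow> direction (translate p U) = U"
proof -
  assume U: "lin_subspace U"
  have "a - b \<in> U" if "a \<in> translate p U" "b \<in> translate p U" for a b
    using that lin_subspace_diff[OF U, of "a - p" "b - p"] by (simp add: mem_translate)
  moreover have "u \<in> direction (translate p U)" if "u \<in> U" for u
  proof -
    have "p + u \<in> translate p U" "p \<in> translate p U"
      using that U by (auto simp: mem_translate lin_subspace_def)
    then show ?thesis unfolding direction_def by force
  qed
  ultimately show ?thesis unfolding direction_def by blast
qed

lemma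
  assumes "S \<in> affine_kspaces k"
  shows direction_in_subspaces: "direction S \<in> subspaces k"
    and lin_subspace_direction: "lin_subspace (direction S)"
    and affine_kspace_eq_translate: "s \<in> S \<Longrightarrow> S = translate s (direction S)"
    and affine_kspace_nonempty: "S \<noteq> {}"
proof -
  obtain p U where S: "S = translate p U" "U \<in> subspaces k" using assms by (auto simp: affine_kspaces_eq)
  then have U: "lin_subspace U" by (simp add: lin_subspace_of_subspaces)
  show "direction S \<in> subspaces k" "lin_subspace (direction S)" using S U by (simp_all add: direction_translate)
  show "s \<in> S \<Longrightarrow> S = translate s (direction S)" using S U direction_translate translate_eq by metis
  show "S \<noteq> {}" using S U in_translate_self by blast
qed

lemma card_affine_kspace: "S \<in> affine_kspaces k \<Longrightarrow> card S = CARD('a) ^ k"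
  for S :: "('n::finite \<Rightarrow> 'a::{field,finite}) set"
proof -
  assume S: "S \<in> affine_kspaces k"
  then obtain s where "s \<in> S" using affine_kspace_nonempty by blast
  then have "card S = card (direction S)"
    using affine_kspace_eq_translate[OF S] card_translate by metis
  then show ?thesis using card_of_subspaces[OF direction_in_subspaces[OF S]] by simp
qed

lemma mem_parallel_class_iff:
  assumes S: "S \<in> affine_kspaces k" and U: "lin_subspace U"
  shows "S \<in> parallel_class U \<longleftrightarrow> direction S = U"
proof
  assume "S \<in> parallel_class U"
  then show "direction S = U" unfolding parallel_class_def using direction_translate[OF U] by auto
next
  assume d: "direction S = U"
  obtain s where "s \<in> S" using affine_kspace_nonempty[OF S] by blast
  then have "S = translate s U" using affine_kspace_eq_translate[OF S] d by simp
  then show "S \<in> parallel_class U" unfolding parallel_class_def by blast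
qed

lemma parallel_class_subset: "U \<in> subspaces k \<Longrightarrow> parallel_class U \<subseteq> affine_kspaces k"
  unfolding parallel_class_def by (auto simp: translate_in_affine_kspaces)

lemma parallel_classes_disjoint:
  assumes U: "lin_subspace U" and V: "lin_subspace V" and "U \<noteq> V"
  shows "parallel_class U \<inter> parallel_class V = {}"
proof -
  have "translate p U \<noteq> translate p' V" for p p'
    using direction_translate[OF U, of p] direction_translate[OF V, of p'] \<open>U \<noteq> V\<close> by metis
  then show ?thesis unfolding parallel_class_def by blast
qed

lemma spread_parallel_class: "U \<in> subspaces k \<Longrightarrow> spread k (parallel_class U)"
  unfolding spread_def partial_spread_def
proof (intro conjI ballI impI)
  assume U: "U \<in> subspaces k"
  then show "parallel_class U \<subseteq> affine_kspaces k" by (rule parallel_class_subset)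
  show "S \<inter> T = {}" if "S \<in> parallel_class U" "T \<in> parallel_class U" "S \<noteq> T" for S T
    using that translate_disjoint_or_eq[OF lin_subspace_of_subspaces[OF U]]
    unfolding parallel_class_def by blast
  show "\<Union> (parallel_class U) = UNIV"
    using in_translate_self[OF lin_subspace_of_subspaces[OF U]] unfolding parallel_class_def by blast
qed

lemma card_affine_kspaces_through:
  fixes P :: "'n::finite \<Rightarrow> 'a::{field,finite}"
  shows "card {S \<in> affine_kspaces k. P \<in> S} = card (subspaces k :: ('n \<Rightarrow> 'a) set set)"
proof -
  have "{S \<in> affine_kspaces k. P \<in> S} = (\<lambda>U. translate P U) ` subspaces k"
  proof
    show "{S \<in> affine_kspaces k. P \<in> S} \<subseteq> (\<lambda>U. translate P U) ` subspaces k"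
      using affine_kspace_eq_translate direction_in_subspaces by blast
    show "(\<lambda>U. translate P U) ` subspaces k \<subseteq> {S \<in> affine_kspaces k. P \<in> S}"
      using translate_in_affine_kspaces in_translate_self lin_subspace_of_subspaces by blast
  qed
  moreover have "inj_on (\<lambda>U. translate P U) (subspaces k)"
    by (rule inj_onI) (metis direction_translate lin_subspace_of_subspaces)
  ultimately show ?thesis by (simp add: card_image)
qed

section \<open>Weights of Cameron-Liebler sets\<close>

definition cl_weight :: "nat \<Rightarrow> ('n \<Rightarrow> 'a::field) set set \<Rightarrow> (('n \<Rightarrow> 'a) \<Rightarrow> real) \<Rightarrow> bool" where
  "cl_weight k L w \<longleftrightarrow> (\<forall>S\<in>affine_kspaces k. (if S \<in> L then 1 else 0) = (\<Sum>P\<in>S. w P))"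

lemma cameron_liebler_iff_cl_weight: "cameron_liebler k L \<longleftrightarrow> (\<exists>w. cl_weight k L w)"
  unfolding cameron_liebler_def cl_weight_def ..

lemma cameron_liebler_if_sums_affine:
  fixes L :: "('n::finite \<Rightarrow> 'a::{field,finite}) set set" and F :: "('n \<Rightarrow> 'a) \<Rightarrow> real"
  assumes "a \<noteq> 0"
    and sums: "\<And>S. S \<in> affine_kspaces k \<Longrightarrow> (\<Sum>P\<in>S. F P) = a * (if S \<in> L then 1 else 0) + b"
  shows "cameron_liebler k L"
proof -
  define w where "w P = (F P - b / real CARD('a) ^ k) / a" for P
  have "cl_weight k L w"
    unfolding cl_weight_def
  proof
    fix S :: "('n \<Rightarrow> 'a) set" assume S: "S \<in> affine_kspaces k"
    have "(\<Sum>P\<in>S. w P) = ((\<Sum>P\<in>S. F P) - b) / a"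
      unfolding w_def using card_affine_kspace[OF S]
      by (simp add: sum_divide_distrib[symmetric] sum_subtractf)
    then show "(if S \<in> L then 1 else 0) = (\<Sum>P\<in>S. w P)" using assms(1) sums[OF S] by simp
  qed
  then show ?thesis using cameron_liebler_iff_cl_weight by blast
qed

lemma sum_indicator_eq_card: "finite A \<Longrightarrow> (\<Sum>x\<in>A. if x \<in> B then 1 else (0::real)) = real (card (A \<inter> B))"
  using sum_of_bool_eq[of A "\<lambda>x. x \<in> B", where 'a=real] unfolding of_bool_def by simp

lemma card_inter_partial_spread:
  fixes L :: "('n::finite \<Rightarrow> 'a::{field,finite}) set set"
  assumes w: "cl_weight k L w" and R: "partial_spread k R"
  shows "real (card (L \<inter> R)) = (\<Sum>P\<in>\<Union>R. w P)"
proof -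
  have "real (card (L \<inter> R)) = (\<Sum>S\<in>R. if S \<in> L then 1 else 0)"
    using sum_indicator_eq_card[of R L] by (simp add: Int_commute)
  also have "\<dots> = (\<Sum>S\<in>R. \<Sum>P\<in>S. w P)"
  proof (rule sum.cong[OF refl])
    fix S assume "S \<in> R"
    then have "S \<in> affine_kspaces k" using R unfolding partial_spread_def by blast
    then show "(if S \<in> L then 1 else 0) = (\<Sum>P\<in>S. w P)" using w unfolding cl_weight_def by blast
  qed
  also have "\<dots> = (\<Sum>P\<in>\<Union>R. w P)"
    using R unfolding partial_spread_def by (subst sum.Union_disjoint) auto
  finally show ?thesis .
qed

lemma card_eq_total_weight:
  fixes L :: "('n::finite \<Rightarrow> 'a::{field,finite}) set set"
  assumes w: "cl_weight k L w" and L: "L \<subseteq> affine_kspaces k"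
  shows "real (card L) = real (card (subspaces k :: ('n \<Rightarrow> 'a) set set)) * (\<Sum>P\<in>UNIV. w P)"
proof -
  have "real (card L) = (\<Sum>S\<in>affine_kspaces k. if S \<in> L then 1 else 0)"
    using sum_indicator_eq_card[of "affine_kspaces k" L] L by (simp add: Int_absorb1)
  also have "\<dots> = (\<Sum>S\<in>affine_kspaces k. \<Sum>P\<in>UNIV. if P \<in> S then w P else 0)"
    using w unfolding cl_weight_def by (intro sum.cong) (auto simp: sum.If_cases)
  also have "\<dots> = (\<Sum>P\<in>UNIV. \<Sum>S\<in>affine_kspaces k. if P \<in> S then w P else 0)"
    by (rule sum.swap)
  also have "\<dots> = (\<Sum>P\<in>UNIV. w P * real (card {S \<in> affine_kspaces k. P \<in> S}))"
    by (intro sum.cong) (auto simp: sum.If_cases Int_def)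
  finally show ?thesis by (simp add: card_affine_kspaces_through sum_distrib_right mult.commute)
qed

lemma total_weight:
  fixes L :: "('n::finite \<Rightarrow> 'a::{field,finite}) set set"
  assumes "cl_weight k L w" "L \<subseteq> affine_kspaces k" "k \<le> CARD('n)"
    and "real (card L) = real x * gauss_binom (real CARD('a)) CARD('n) k"
  shows "(\<Sum>P\<in>UNIV. w P) = real x"
  using card_eq_total_weight[OF assms(1,2)] assms(4) card_subspaces[OF assms(3), where 'a='a]
    card_subspaces_pos[OF assms(3), where 'a='a]
  by (simp add: mult.commute)

lemma cameron_liebler_imp_card_inter_spread:
  fixes L :: "('n::finite \<Rightarrow> 'a::{field,finite}) set set"
  assumes "cameron_liebler k L" "L \<subseteq> affine_kspaces k" "k \<le> CARD('n)"
    and "real (card L) = real x * gauss_binom (real CARD('a)) CARD('n) k"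
    and "spread k S"
  shows "card (L \<inter> S) = x"
proof -
  obtain w where w: "cl_weight k L w" using assms(1) cameron_liebler_iff_cl_weight by blast
  have "real (card (L \<inter> S)) = (\<Sum>P\<in>UNIV. w P)"
    using card_inter_partial_spread[OF w] assms(5) unfolding spread_def by simp
  then show ?thesis using total_weight[OF w assms(2-4)] by simp
qed

lemma cameron_liebler_imp_card_inter_switching:
  fixes L :: "('n::finite \<Rightarrow> 'a::{field,finite}) set set"
  assumes "cameron_liebler k L" "conj_switching k R R'"
  shows "card (L \<inter> R) = card (L \<inter> R')"
proof -
  obtain w where w: "cl_weight k L w" using assms(1) cameron_liebler_iff_cl_weight by blast
  have "real (card (L \<inter> R)) = real (card (L \<inter> R'))"
    using card_inter_partial_spread[OF w, of R] card_inter_partial_spread[OF w, of R'] assms(2)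
    unfolding conj_switching_def by simp
  then show ?thesis by simp
qed


section \<open>Balanced sets are Cameron-Liebler sets\<close>

definition parallel_class_in :: "('n \<Rightarrow> 'a::field) set \<Rightarrow> ('n \<Rightarrow> 'a) set \<Rightarrow> ('n \<Rightarrow> 'a) set set" where
  "parallel_class_in U H = {T \<in> parallel_class U. T \<subseteq> H}"

definition hyperplane_balanced :: "nat \<Rightarrow> ('n::finite \<Rightarrow> 'a::field) set set \<Rightarrow> bool" where
  "hyperplane_balanced k L \<longleftrightarrow>
     (\<forall>D\<in>hyperplane_dirs. \<forall>p. \<forall>U\<in>subspaces k. \<forall>U'\<in>subspaces k. U \<subseteq> D \<longrightarrow> U' \<subseteq> D \<longrightarrow>
        card (L \<inter> parallel_class_in U (translate p D)) = card (L \<inter> parallel_class_in U' (translate p D)))"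

lemma exists_subspace_in_hyperplane:
  fixes D :: "('n::finite \<Rightarrow> 'a::{field,finite}) set"
  assumes D: "D \<in> hyperplane_dirs" and k: "k \<le> CARD('n) - 1"
  shows "\<exists>U\<in>subspaces k. U \<subseteq> D"
proof -
  obtain b where b: "lin_indep (CARD('n) - 1) b" "D = lin_span (CARD('n) - 1) b"
    using D by (auto simp: subspaces_def)
  have "lin_span k b \<in> subspaces k" using lin_indep_mono[OF b(1) k] by (rule lin_span_in_subspaces)
  moreover have "lin_span k b \<subseteq> D"
    unfolding b(2) lin_span_subset_iff[OF lin_subspace_lin_span] using k by (auto intro: in_lin_span)
  ultimately show ?thesis by blast
qed

lemma hyperplane_coset_exists:
  fixes D :: "('n::finite \<Rightarrow> 'a::{field,finite}) set"
  assumes D: "D \<in> hyperplane_dirs" and u: "u \<notin> D"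
  shows "\<exists>a. v - scale a u \<in> D"
proof -
  define m where "m = CARD('n) - 1"
  obtain b where b: "lin_indep m b" "D = lin_span m b"
    using D by (auto simp: subspaces_def m_def)
  have n: "CARD('n) = Suc m" unfolding m_def by simp
  define b' where "b' = b(m := u)"
  have span: "lin_span m b' = D" unfolding b'_def b(2) by (rule lin_span_cong) simp
  have "lin_indep m b'" unfolding b'_def using b(1) lin_indep_cong[of m "b(m := u)" b] by simp
  then have "lin_indep (Suc m) b'" using span u lin_indep_Suc[of m b'] by (simp add: b'_def)
  then have "card (lin_span (Suc m) b') = card (UNIV :: ('n \<Rightarrow> 'a) set)"
    by (simp add: card_lin_span card_fun n)
  then have "lin_span (Suc m) b' = UNIV" by (simp add: card_subset_eq)
  then obtain c where "v = lin_comb (Suc m) c b'" by (metis UNIV_I imageE lin_span_def)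
  then have "v - scale (c m) u = lin_comb m c b'" by (simp add: lin_comb_Suc b'_def)
  then show ?thesis using span by (metis rangeI lin_span_def)
qed

lemma hyperplane_coset_unique:
  assumes D: "lin_subspace D" and u: "u \<notin> D" and "v - scale a u \<in> D" "v - scale b u \<in> D"
  shows "a = b"
proof (rule ccontr)
  assume ne: "a \<noteq> b"
  have "(v - scale b u) - (v - scale a u) \<in> D" using lin_subspace_diff[OF D] assms(3,4) by blast
  moreover have "(v - scale b u) - (v - scale a u) = scale (a - b) u"
    by (simp add: scale_def fun_eq_iff algebra_simps)
  ultimately have "scale (1 / (a - b)) (scale (a - b) u) \<in> D" using D unfolding lin_subspace_def by metis
  then show False using ne u by (simp add: scale_scale)
qed

lemma sum_card_parallel_class_in_cosets:
  fixes D :: "('n::finite \<Rightarrow> 'a::{field,finite}) set"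
  assumes D: "D \<in> hyperplane_dirs" and U: "lin_subspace U" "U \<subseteq> D" and u: "u \<notin> D"
  shows "(\<Sum>a\<in>UNIV. card (L \<inter> parallel_class_in U (translate (v + scale a u) D))) = card (L \<inter> parallel_class U)"
proof -
  let ?C = "\<lambda>a. parallel_class_in U (translate (v + scale a u) D)"
  have sD: "lin_subspace D" using D by (rule lin_subspace_of_subspaces)
  have in_hyperplane: "t \<in> translate (v + scale a u) D \<longleftrightarrow> (t - v) - scale a u \<in> D" for t a
    by (simp add: mem_translate algebra_simps)
  have "parallel_class U \<subseteq> (\<Union>a. ?C a)"
  proof
    fix T assume "T \<in> parallel_class U"
    then obtain t where T: "T = translate t U" unfolding parallel_class_def by blast
    obtain a where "(t - v) - scale a u \<in> D" using hyperplane_coset_exists[OF D u] by blast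
    then have "translate t D = translate (v + scale a u) D"
      by (intro translate_eq[OF sD]) (simp add: in_hyperplane)
    then have "T \<in> ?C a" using T translate_mono[OF U(2)] unfolding parallel_class_in_def parallel_class_def by auto
    then show "T \<in> (\<Union>a. ?C a)" by blast
  qed
  then have partition: "L \<inter> parallel_class U = (\<Union>a. L \<inter> ?C a)" unfolding parallel_class_in_def by blast
  have "?C a \<inter> ?C b = {}" if "a \<noteq> b" for a b
  proof (rule ccontr)
    assume "?C a \<inter> ?C b \<noteq> {}"
    then obtain t where "translate t U \<subseteq> translate (v + scale a u) D"
      "translate t U \<subseteq> translate (v + scale b u) D"
      unfolding parallel_class_in_def parallel_class_def by blast
    then have "(t - v) - scale a u \<in> D" "(t - v) - scale b u \<in> D"
      using in_translate_self[OF U(1), of t] in_hyperplane by blast+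
    then show False using hyperplane_coset_unique[OF sD u] that by blast
  qed
  then have "card (\<Union>a. L \<inter> ?C a) = (\<Sum>a\<in>UNIV. card (L \<inter> ?C a))"
    by (intro card_UN_disjoint) auto
  then show ?thesis using partition by simp
qed

lemma sum_translate_shift:
  fixes G :: "('n::finite \<Rightarrow> 'a::{field,finite}) \<Rightarrow> real"
  assumes U: "lin_subspace U" and a: "a \<in> U"
  shows "(\<Sum>P\<in>translate s U. G (P + a)) = (\<Sum>P\<in>translate s U. G P)"
proof -
  have "(\<lambda>P. P + a) ` translate s U = translate s U"
  proof
    show "(\<lambda>P. P + a) ` translate s U \<subseteq> translate s U"
    proof clarify
      fix P assume "P \<in> translate s U"
      then have "(P - s) + a \<in> U" using U a unfolding lin_subspace_def by (simp add: mem_translate)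
      moreover have "(P - s) + a = P + a - s" by (simp add: algebra_simps)
      ultimately show "P + a \<in> translate s U" by (simp add: mem_translate)
    qed
    show "translate s U \<subseteq> (\<lambda>P. P + a) ` translate s U"
    proof
      fix P assume "P \<in> translate s U"
      then have "P - a \<in> translate s U"
        using lin_subspace_diff[OF U, of "P - s" a] a by (simp add: mem_translate algebra_simps)
      then show "P \<in> (\<lambda>P. P + a) ` translate s U" by (intro image_eqI[of _ _ "P - a"]) auto
    qed
  qed
  then show ?thesis using sum.reindex[of "\<lambda>P. P + a" "translate s U" G] by (simp add: inj_on_def)
qed

text \<open>Translating by the multiples of u permutes the points of translate s U and runs through the
  q cosets of D, so the deviations from the mean cancel.\<close>

lemma sum_deviation_transversal:
  fixes D :: "('n::finite \<Rightarrow> 'a::{field,finite}) set"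
  assumes D: "D \<in> hyperplane_dirs" and U0: "lin_subspace U0" "U0 \<subseteq> D"
    and U: "lin_subspace U" "u \<in> U" "u \<notin> D"
  shows "(\<Sum>P\<in>translate s U. real (card (L \<inter> parallel_class_in U0 (translate P D)))
           - real (card (L \<inter> parallel_class U0)) / real CARD('a)) = 0"
proof -
  define M where "M = real (card (L \<inter> parallel_class U0))"
  define Q where "Q = real CARD('a)"
  have Q: "Q > 0" unfolding Q_def by simp
  define G where "G P = real (card (L \<inter> parallel_class_in U0 (translate P D))) - M / Q" for P
  have shift: "(\<Sum>P\<in>translate s U. G P) = (\<Sum>P\<in>translate s U. G (P + scale a u))" for a
    using sum_translate_shift[OF U(1), of "scale a u" G s] U unfolding lin_subspace_def by simp
  have "Q * (\<Sum>P\<in>translate s U. G P) = (\<Sum>a\<in>(UNIV::'a set). \<Sum>P\<in>translate s U. G (P + scale a u))"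
    using shift unfolding Q_def by simp
  also have "\<dots> = (\<Sum>P\<in>translate s U. \<Sum>a\<in>(UNIV::'a set). G (P + scale a u))"
    by (rule sum.swap)
  also have "\<dots> = 0"
  proof (rule sum.neutral, rule ballI)
    fix P
    have "(\<Sum>a\<in>(UNIV::'a set). G (P + scale a u))
        = (\<Sum>a\<in>(UNIV::'a set). real (card (L \<inter> parallel_class_in U0 (translate (P + scale a u) D)))) - Q * (M / Q)"
      unfolding G_def Q_def by (simp add: sum_subtractf)
    also have "\<dots> = 0"
      using sum_card_parallel_class_in_cosets[OF D U0 U(3), of L P] Q
      unfolding M_def by (simp flip: of_nat_sum)
    finally show "(\<Sum>a\<in>(UNIV::'a set). G (P + scale a u)) = 0" .
  qed
  finally show ?thesis using Q unfolding G_def M_def Q_def by simp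
qed

lemma translate_subset_translate_iff:
  assumes D: "lin_subspace D" and U: "lin_subspace U" "U \<subseteq> D"
  shows "translate t U \<subseteq> translate s D \<longleftrightarrow> t - s \<in> D"
proof
  assume "translate t U \<subseteq> translate s D"
  then have "t \<in> translate s D" using in_translate_self[OF U(1), of t] by blast
  then show "t - s \<in> D" by (simp add: mem_translate)
next
  assume "t - s \<in> D"
  then have "translate t D = translate s D" using translate_eq[OF D] by (simp add: mem_translate)
  then show "translate t U \<subseteq> translate s D" using translate_mono[OF U(2)] by metis
qed

lemma subspaces_Suc_insert:
  assumes U: "U \<in> subspaces k" and v: "v \<notin> U"
  obtains U' where "U' \<in> subspaces (Suc k)" "\<And>D. lin_subspace D \<Longrightarrow> U' \<subseteq> D \<longleftrightarrow> U \<subseteq> D \<and> v \<in> D"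
proof -
  obtain b where b: "lin_indep k b" "U = lin_span k b" using U by (auto simp: subspaces_def)
  define b' where "b' = b(k := v)"
  have "lin_indep k b' = lin_indep k b" unfolding b'_def by (rule lin_indep_cong) simp
  moreover have "lin_span k b' = lin_span k b" unfolding b'_def by (rule lin_span_cong) simp
  ultimately have "lin_indep (Suc k) b'" using lin_indep_SucI[of k b'] b v by (simp add: b'_def)
  moreover have "lin_span (Suc k) b' \<subseteq> D \<longleftrightarrow> U \<subseteq> D \<and> v \<in> D" if "lin_subspace D" for D
    using lin_span_subset_iff[OF that] b(2) unfolding b'_def by (auto simp: less_Suc_eq)
  ultimately show ?thesis using that lin_span_in_subspaces by blast
qed

lemma card_hyperplanes_containing_translate:
  fixes U :: "('n::finite \<Rightarrow> 'a::{field,finite}) set"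
  assumes U: "U \<in> subspaces k" and kn: "k + 1 \<le> CARD('n) - 1"
  shows "real (card {D \<in> hyperplane_dirs. U \<subseteq> D \<and> translate t U \<subseteq> translate s D})
       = (if translate t U = translate s U then hyperplane_count (real CARD('a)) CARD('n) k
          else hyperplane_count (real CARD('a)) CARD('n) (k + 1))"
proof -
  have sU: "lin_subspace U" using U by (rule lin_subspace_of_subspaces)
  have eq: "{D \<in> hyperplane_dirs. U \<subseteq> D \<and> translate t U \<subseteq> translate s D}
      = {D \<in> hyperplane_dirs. U \<subseteq> D \<and> t - s \<in> D}"
    using translate_subset_translate_iff[OF lin_subspace_of_subspaces sU] by blast
  show ?thesis
  proof (cases "translate t U = translate s U")
    case True
    then have "t - s \<in> U" using in_translate_self[OF sU, of t] by (simp add: mem_translate)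
    then have "{D \<in> hyperplane_dirs. U \<subseteq> D \<and> t - s \<in> D} = {D \<in> hyperplane_dirs. U \<subseteq> D}"
      by blast
    then show ?thesis using True eq card_hyperplanes_containing[OF U] kn by simp
  next
    case False
    then have "t - s \<notin> U" using translate_eq[OF sU] by (auto simp: mem_translate)
    then obtain U' where U': "U' \<in> subspaces (Suc k)"
      "\<And>D. lin_subspace D \<Longrightarrow> U' \<subseteq> D \<longleftrightarrow> U \<subseteq> D \<and> t - s \<in> D"
      using subspaces_Suc_insert[OF U] by blast
    then have "{D \<in> hyperplane_dirs. U \<subseteq> D \<and> t - s \<in> D} = {D \<in> hyperplane_dirs. U' \<subseteq> D}"
      using lin_subspace_of_subspaces by blast
    then show ?thesis using False eq card_hyperplanes_containing[OF U'(1)] kn by simp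
  qed
qed

lemma card_parallel_class_in_eq_sum:
  fixes L :: "('n::finite \<Rightarrow> 'a::{field,finite}) set set"
  shows "real (card (L \<inter> parallel_class_in U H)) = (\<Sum>T\<in>L \<inter> parallel_class U. if T \<subseteq> H then 1 else 0)"
proof -
  have "L \<inter> parallel_class_in U H = (L \<inter> parallel_class U) \<inter> {T. T \<subseteq> H}" unfolding parallel_class_in_def by blast
  then show ?thesis using sum_indicator_eq_card[of "L \<inter> parallel_class U" "{T. T \<subseteq> H}"] by simp
qed

lemma sum_card_parallel_class_in_hyperplanes_through:
  fixes U :: "('n::finite \<Rightarrow> 'a::{field,finite}) set" and L :: "('n \<Rightarrow> 'a) set set"
    and s :: "'n \<Rightarrow> 'a"
  assumes U: "U \<in> subspaces k" and kn: "k + 1 \<le> CARD('n) - 1"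
  defines "h j \<equiv> hyperplane_count (real CARD('a)) CARD('n) j"
    and "\<chi> \<equiv> if translate s U \<in> L then 1 else 0"
  shows "(\<Sum>D\<in>{D \<in> hyperplane_dirs. U \<subseteq> D}. real (card (L \<inter> parallel_class_in U (translate s D))))
       = h k * \<chi> + h (k + 1) * (real (card (L \<inter> parallel_class U)) - \<chi>)"
proof -
  let ?HU = "{D \<in> hyperplane_dirs. U \<subseteq> D}"
  let ?LU = "L \<inter> parallel_class U"
  have sU: "lin_subspace U" using U by (rule lin_subspace_of_subspaces)
  have "(\<Sum>D\<in>?HU. real (card (L \<inter> parallel_class_in U (translate s D))))
      = (\<Sum>D\<in>?HU. \<Sum>T\<in>?LU. if T \<subseteq> translate s D then 1 else 0)"
    by (simp add: card_parallel_class_in_eq_sum)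
  also have "\<dots> = (\<Sum>T\<in>?LU. \<Sum>D\<in>?HU. if T \<subseteq> translate s D then 1 else 0)"
    by (rule sum.swap)
  also have "\<dots> = (\<Sum>T\<in>?LU. if T = translate s U then h k else h (k + 1))"
  proof (rule sum.cong[OF refl])
    fix T assume "T \<in> ?LU"
    then obtain t where T: "T = translate t U" unfolding parallel_class_def by blast
    have "?HU \<inter> {D. T \<subseteq> translate s D}
        = {D \<in> hyperplane_dirs. U \<subseteq> D \<and> translate t U \<subseteq> translate s D}"
      using T by blast
    then show "(\<Sum>D\<in>?HU. if T \<subseteq> translate s D then 1 else 0) = (if T = translate s U then h k else h (k + 1))"
      using card_hyperplanes_containing_translate[OF U kn, of t s] T
        sum_indicator_eq_card[of ?HU "{D. T \<subseteq> translate s D}"]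
      unfolding h_def by simp
  qed
  also have "\<dots> = (\<Sum>T\<in>?LU. h (k + 1) + (if T = translate s U then h k - h (k + 1) else 0))"
    by (intro sum.cong) auto
  also have "\<dots> = h (k + 1) * real (card ?LU) + (if translate s U \<in> ?LU then h k - h (k + 1) else 0)"
    by (simp add: sum.distrib)
  also have "translate s U \<in> ?LU \<longleftrightarrow> translate s U \<in> L"
    unfolding parallel_class_def by blast
  finally show ?thesis unfolding \<chi>_def by (simp add: algebra_simps)
qed

lemma card_parallel_class_in_balanced:
  assumes bal: "hyperplane_balanced k L" and D: "D \<in> hyperplane_dirs"
    and U: "U \<in> subspaces k" "U \<subseteq> D" and U0: "U0 \<in> subspaces k" "U0 \<subseteq> D"
    and P: "P \<in> translate s U"
  shows "card (L \<inter> parallel_class_in U0 (translate P D)) = card (L \<inter> parallel_class_in U (translate s D))"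
proof -
  have "P \<in> translate s D" using P translate_mono[OF U(2)] by blast
  then have "translate P D = translate s D"
    using translate_eq lin_subspace_of_subspaces D by blast
  moreover have "card (L \<inter> parallel_class_in U0 (translate s D)) = card (L \<inter> parallel_class_in U (translate s D))"
    using bal D U U0 unfolding hyperplane_balanced_def by blast
  ultimately show ?thesis by simp
qed

text \<open>Hyperplane directions not containing the direction U of S contribute nothing; for the
  others, balance allows to replace UD D by U.\<close>

lemma sum_hyperplane_deviations:
  fixes L :: "('n::finite \<Rightarrow> 'a::{field,finite}) set set" and S :: "('n \<Rightarrow> 'a) set"
  assumes kn: "k + 2 \<le> CARD('n)"
    and UD: "\<And>D. D \<in> hyperplane_dirs \<Longrightarrow> UD D \<in> subspaces k \<and> UD D \<subseteq> D"
    and M: "\<And>U. U \<in> subspaces k \<Longrightarrow> card (L \<inter> parallel_class U) = M"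
    and bal: "hyperplane_balanced k L"
    and S: "S \<in> affine_kspaces k"
  defines "q \<equiv> real CARD('a)"
    and "h j \<equiv> hyperplane_count (real CARD('a)) CARD('n) j"
    and "\<chi> \<equiv> if S \<in> L then 1 else 0"
  shows "(\<Sum>D\<in>hyperplane_dirs. \<Sum>P\<in>S. real (card (L \<inter> parallel_class_in (UD D) (translate P D))) - real M / q)
       = q ^ k * (h k * \<chi> + h (k + 1) * (real M - \<chi>) - h k * real M / q)"
proof -
  define U where "U = direction S"
  have U: "U \<in> subspaces k" "lin_subspace U"
    using direction_in_subspaces[OF S] lin_subspace_direction[OF S] unfolding U_def by auto
  obtain s where "s \<in> S" using affine_kspace_nonempty[OF S] by blast
  then have Ss: "S = translate s U" unfolding U_def by (rule affine_kspace_eq_translate[OF S])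
  have cS: "real (card S) = q ^ k" using card_affine_kspace[OF S] unfolding q_def by simp
  let ?G = "\<lambda>D P. real (card (L \<inter> parallel_class_in (UD D) (translate P D))) - real M / q"
  let ?HU = "{D \<in> hyperplane_dirs. U \<subseteq> D}"
  have through: "(\<Sum>P\<in>S. ?G D P) = q ^ k * (real (card (L \<inter> parallel_class_in U (translate s D))) - real M / q)"
    if D: "D \<in> ?HU" for D
  proof -
    have "card (L \<inter> parallel_class_in (UD D) (translate P D)) = card (L \<inter> parallel_class_in U (translate s D))"
      if "P \<in> S" for P
      using card_parallel_class_in_balanced[OF bal _ U(1) _ _ _ that[unfolded Ss]] UD[of D] D by blast
    then show ?thesis using cS by simp
  qed
  have transversal: "(\<Sum>P\<in>S. ?G D P) = 0" if D: "D \<in> hyperplane_dirs - ?HU" for D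
  proof -
    obtain u where "u \<in> U" "u \<notin> D" using D by blast
    then show ?thesis
      using sum_deviation_transversal[of D "UD D" U u L s] UD[of D] D M[of "UD D"] U Ss
        lin_subspace_of_subspaces[of "UD D" k]
      unfolding q_def by simp
  qed
  have card_HU: "real (card ?HU) = h k"
    using card_hyperplanes_containing[OF U(1)] kn unfolding h_def by simp
  have "(\<Sum>D\<in>hyperplane_dirs. \<Sum>P\<in>S. ?G D P) = (\<Sum>D\<in>?HU. \<Sum>P\<in>S. ?G D P)"
    using transversal by (intro sum.mono_neutral_right) auto
  also have "\<dots> = (\<Sum>D\<in>?HU. q ^ k * (real (card (L \<inter> parallel_class_in U (translate s D))) - real M / q))"
    using through by (rule sum.cong[OF refl])
  also have "\<dots> = q ^ k * ((\<Sum>D\<in>?HU. real (card (L \<inter> parallel_class_in U (translate s D)))) - h k * (real M / q))"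
    using card_HU by (simp add: sum_distrib_left[symmetric] sum_subtractf)
  also have "\<dots> = q ^ k * (h k * \<chi> + h (k + 1) * (real M - \<chi>) - h k * real M / q)"
    using sum_card_parallel_class_in_hyperplanes_through[OF U(1), where L=L and s=s] kn M[OF U(1)] Ss
    unfolding h_def \<chi>_def by simp
  finally show ?thesis .
qed

lemma cameron_liebler_if_hyperplane_balanced:
  fixes L :: "('n::finite \<Rightarrow> 'a::{field,finite}) set set"
  assumes kn: "k + 2 \<le> CARD('n)"
    and M: "\<And>U. U \<in> subspaces k \<Longrightarrow> card (L \<inter> parallel_class U) = M"
    and bal: "hyperplane_balanced k L"
  shows "cameron_liebler k L"
proof -
  have "\<forall>D\<in>(hyperplane_dirs :: ('n \<Rightarrow> 'a) set set). \<exists>U\<in>subspaces k. U \<subseteq> D"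
    using exists_subspace_in_hyperplane[where 'n='n and 'a='a, of _ k] kn by simp
  then obtain UD :: "('n \<Rightarrow> 'a) set \<Rightarrow> ('n \<Rightarrow> 'a) set"
    where UD: "\<And>D. D \<in> hyperplane_dirs \<Longrightarrow> UD D \<in> subspaces k \<and> UD D \<subseteq> D"
    by metis
  define q where "q = real CARD('a)"
  define h0 where "h0 = hyperplane_count q CARD('n) k"
  define h1 where "h1 = hyperplane_count q CARD('n) (k + 1)"
  have hne: "h0 - h1 \<noteq> 0"
    using hyperplane_count_Suc_neq[of q k "CARD('n)"] card_field_ge_2[where 'a='a] kn
    unfolding h0_def h1_def q_def by simp
  define F where
    "F P = (\<Sum>D\<in>hyperplane_dirs. real (card (L \<inter> parallel_class_in (UD D) (translate P D))) - real M / q)"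
    for P
  show ?thesis
  proof (rule cameron_liebler_if_sums_affine[where F=F])
    show "q ^ k * (h0 - h1) \<noteq> 0" using hne unfolding q_def by simp
    fix S :: "('n \<Rightarrow> 'a) set" assume S: "S \<in> affine_kspaces k"
    have "(\<Sum>P\<in>S. F P) = q ^ k * (h0 * (if S \<in> L then 1 else 0)
        + h1 * (real M - (if S \<in> L then 1 else 0)) - h0 * real M / q)"
      using sum_hyperplane_deviations[OF kn UD M bal S] unfolding F_def q_def h0_def h1_def
      by (simp add: sum.swap[of _ S])
    then show "(\<Sum>P\<in>S. F P) = q ^ k * (h0 - h1) * (if S \<in> L then 1 else 0)
        + q ^ k * (h1 * real M - h0 * real M / q)"
      by (simp add: algebra_simps)
  qed
qed


section \<open>Spreads and switching sets\<close>

lemma parallel_translate_subset_or_disjoint: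
  assumes D: "lin_subspace D" and V: "lin_subspace V" "V \<subseteq> D" and T: "T \<in> parallel_class V"
  shows "T \<subseteq> translate p D \<or> T \<inter> translate p D = {}"
proof -
  obtain t where t: "T = translate t V" using T unfolding parallel_class_def by blast
  have "T \<subseteq> translate t D" using t translate_mono[OF V(2)] by blast
  moreover have "translate t D = translate p D \<or> translate t D \<inter> translate p D = {}"
    using translate_disjoint_or_eq[OF D] by blast
  ultimately show ?thesis by blast
qed

lemma Union_parallel_class_in:
  assumes D: "lin_subspace D" and V: "lin_subspace V" "V \<subseteq> D"
  shows "\<Union> (parallel_class_in V (translate p D)) = translate p D"
proof
  show "\<Union> (parallel_class_in V (translate p D)) \<subseteq> translate p D" unfolding parallel_class_in_def by blast
  show "translate p D \<subseteq> \<Union> (parallel_class_in V (translate p D))"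
  proof
    fix v assume "v \<in> translate p D"
    then have "translate v V \<subseteq> translate p D"
      using translate_eq[OF D] translate_mono[OF V(2)] by metis
    then show "v \<in> \<Union> (parallel_class_in V (translate p D))"
      unfolding parallel_class_in_def parallel_class_def using in_translate_self[OF V(1), of v] by blast
  qed
qed

lemma partial_spread_parallel_class_in: "V \<in> subspaces k \<Longrightarrow> partial_spread k (parallel_class_in V H)"
  using spread_parallel_class[of V k] unfolding spread_def partial_spread_def parallel_class_in_def by blast

lemma partial_spread_Un:
  assumes "partial_spread k A" "partial_spread k B" "\<And>S T. S \<in> A \<Longrightarrow> T \<in> B \<Longrightarrow> S \<inter> T = {}"
  shows "partial_spread k (A \<union> B)"
  using assms unfolding partial_spread_def by (metis Int_commute Un_iff Un_subset_iff)

lemma spread_swap_in_hyperplane: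
  fixes D :: "('n \<Rightarrow> 'a::field) set" and p :: "'n \<Rightarrow> 'a"
  assumes D: "lin_subspace D" and U: "U \<in> subspaces k" "U \<subseteq> D" and U': "U' \<in> subspaces k" "U' \<subseteq> D"
  defines "H \<equiv> translate p D"
  shows "spread k (parallel_class_in U' H \<union> (parallel_class U - parallel_class_in U H))"
  unfolding spread_def
proof
  have sU: "lin_subspace U" and sU': "lin_subspace U'" using U U' lin_subspace_of_subspaces by auto
  show "partial_spread k (parallel_class_in U' H \<union> (parallel_class U - parallel_class_in U H))"
  proof (rule partial_spread_Un)
    show "partial_spread k (parallel_class_in U' H)" by (rule partial_spread_parallel_class_in[OF U'(1)])
    show "partial_spread k (parallel_class U - parallel_class_in U H)"
      using spread_parallel_class[OF U(1)] unfolding spread_def partial_spread_def by blast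
    show "S \<inter> T = {}" if "S \<in> parallel_class_in U' H" "T \<in> parallel_class U - parallel_class_in U H" for S T
      using that parallel_translate_subset_or_disjoint[OF D sU U(2)]
      unfolding H_def parallel_class_in_def by blast
  qed
  show "\<Union> (parallel_class_in U' H \<union> (parallel_class U - parallel_class_in U H)) = UNIV"
  proof (intro set_eqI iffI)
    fix v :: "'n \<Rightarrow> 'a"
    show "v \<in> \<Union> (parallel_class_in U' H \<union> (parallel_class U - parallel_class_in U H))"
    proof (cases "v \<in> H")
      case True
      then show ?thesis using Union_parallel_class_in[OF D sU' U'(2)] unfolding H_def by blast
    next
      case False
      then have "translate v U \<in> parallel_class U - parallel_class_in U H"
        using in_translate_self[OF sU, of v] unfolding parallel_class_in_def parallel_class_def by blast
      then show ?thesis using in_translate_self[OF sU, of v] by blast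
    qed
  qed simp
qed

lemma hyperplane_balanced_if_spreads:
  fixes L :: "('n::finite \<Rightarrow> 'a::{field,finite}) set set"
  assumes spreads: "\<And>S. spread k S \<Longrightarrow> card (L \<inter> S) = x"
  shows "hyperplane_balanced k L"
  unfolding hyperplane_balanced_def
proof (intro ballI allI impI)
  fix D :: "('n \<Rightarrow> 'a) set" and p U U' assume D: "D \<in> hyperplane_dirs" and U: "U \<in> subspaces k" "U \<subseteq> D"
    and U': "U' \<in> subspaces k" "U' \<subseteq> D"
  let ?H = "translate p D"
  have sD: "lin_subspace D" using D by (rule lin_subspace_of_subspaces)
  have "parallel_class_in U' ?H \<inter> (parallel_class U - parallel_class_in U ?H) = {}"
    using partial_spread_parallel_class_in[OF U'(1)] affine_kspace_nonempty
      parallel_translate_subset_or_disjoint[OF sD lin_subspace_of_subspaces[OF U(1)] U(2)]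
    unfolding parallel_class_in_def partial_spread_def by blast
  then have "card (L \<inter> parallel_class_in U' ?H) + card (L \<inter> (parallel_class U - parallel_class_in U ?H))
      = card (L \<inter> (parallel_class_in U' ?H \<union> (parallel_class U - parallel_class_in U ?H)))"
    by (subst card_Un_disjoint[symmetric]) (auto simp: Int_Un_distrib)
  also have "\<dots> = card (L \<inter> parallel_class U)"
    using spreads spread_swap_in_hyperplane[OF sD U U'] spread_parallel_class[OF U(1)] by metis
  also have "\<dots> = card (L \<inter> parallel_class_in U ?H) + card (L \<inter> (parallel_class U - parallel_class_in U ?H))"
    by (subst card_Un_disjoint[symmetric]) (auto simp: parallel_class_in_def intro: arg_cong[where f=card])
  finally show "card (L \<inter> parallel_class_in U ?H) = card (L \<inter> parallel_class_in U' ?H)" by simp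
qed

lemma cameron_liebler_if_spreads:
  fixes L :: "('n::finite \<Rightarrow> 'a::{field,finite}) set set"
  assumes "k + 2 \<le> CARD('n)" and "\<And>S. spread k S \<Longrightarrow> card (L \<inter> S) = x"
  shows "cameron_liebler k L"
  using cameron_liebler_if_hyperplane_balanced[OF assms(1) _ hyperplane_balanced_if_spreads]
    assms(2) spread_parallel_class by metis

lemma conj_switching_parallel_class_in:
  fixes D :: "('n \<Rightarrow> 'a::field) set"
  assumes D: "lin_subspace D" and U: "U \<in> subspaces k" "U \<subseteq> D" and U': "U' \<in> subspaces k" "U' \<subseteq> D"
    and "U \<noteq> U'"
  shows "conj_switching k (parallel_class_in U (translate p D)) (parallel_class_in U' (translate p D))"
  unfolding conj_switching_def
  using partial_spread_parallel_class_in[OF U(1)] partial_spread_parallel_class_in[OF U'(1)]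
    parallel_classes_disjoint[OF lin_subspace_of_subspaces[OF U(1)] lin_subspace_of_subspaces[OF U'(1)]]
    Union_parallel_class_in[OF D lin_subspace_of_subspaces[OF U(1)] U(2)]
    Union_parallel_class_in[OF D lin_subspace_of_subspaces[OF U'(1)] U'(2)] \<open>U \<noteq> U'\<close>
  unfolding parallel_class_in_def by blast

lemma conj_switching_parallel_classes:
  assumes "U \<in> subspaces k" "U' \<in> subspaces k" "U \<noteq> U'"
  shows "conj_switching k (parallel_class U) (parallel_class U')"
  using spread_parallel_class[OF assms(1)] spread_parallel_class[OF assms(2)]
    parallel_classes_disjoint[OF lin_subspace_of_subspaces lin_subspace_of_subspaces] assms
  unfolding conj_switching_def spread_def by metis

lemma cameron_liebler_if_switching:
  fixes L :: "('n::finite \<Rightarrow> 'a::{field,finite}) set set"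
  assumes kn: "k + 2 \<le> CARD('n)"
    and switching: "\<And>R R'. conj_switching k R R' \<Longrightarrow> card (L \<inter> R) = card (L \<inter> R')"
  shows "cameron_liebler k L"
proof -
  obtain U0 :: "('n \<Rightarrow> 'a) set" where U0: "U0 \<in> subspaces k"
    using card_subspaces_pos[of k, where 'n='n and 'a='a] kn by fastforce
  have "card (L \<inter> parallel_class U) = card (L \<inter> parallel_class U0)" if "U \<in> subspaces k" for U
    using switching conj_switching_parallel_classes[OF that U0] by (cases "U = U0") auto
  moreover have "hyperplane_balanced k L"
    unfolding hyperplane_balanced_def
    using switching conj_switching_parallel_class_in[OF lin_subspace_of_subspaces] by metis
  ultimately show ?thesis by (rule cameron_liebler_if_hyperplane_balanced[OF kn])
qed


section \<open>Lines\<close>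

lemma lines_eq_if_two_common_points:
  fixes l m :: "('n::finite \<Rightarrow> 'a::{field,finite}) set"
  assumes l: "l \<in> affine_kspaces 1" and m: "m \<in> affine_kspaces 1"
    and P: "P \<in> l" "P \<in> m" and P': "P' \<in> l" "P' \<in> m" and "P \<noteq> P'"
  shows "l = m"
proof -
  define U where "U = lin_span 1 (\<lambda>_. P' - P)"
  have U: "U \<in> subspaces 1"
    unfolding U_def using \<open>P \<noteq> P'\<close> lin_indep_single[of "P' - P"] by (intro lin_span_in_subspaces) simp
  have "direction X = U" if X: "X \<in> affine_kspaces 1" "P \<in> X" "P' \<in> X" for X
  proof -
    have "P' - P \<in> direction X" using X unfolding direction_def by blast
    then have "U \<subseteq> direction X"
      unfolding U_def lin_span_subset_iff[OF lin_subspace_direction[OF X(1)]] by simp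
    then show ?thesis using subspaces_eq_of_subset[OF direction_in_subspaces[OF X(1)] U] by simp
  qed
  then show ?thesis
    using l m P P' affine_kspace_eq_translate[OF l P(1)] affine_kspace_eq_translate[OF m P(2)] by metis
qed

lemma card_lines_through_two_points:
  fixes P P' :: "'n::finite \<Rightarrow> 'a::{field,finite}"
  assumes "P \<noteq> P'"
  shows "card {m \<in> affine_kspaces 1. P \<in> m \<and> P' \<in> m} = 1"
proof -
  define U where "U = lin_span 1 (\<lambda>_. P' - P)"
  have U: "U \<in> subspaces 1"
    unfolding U_def using assms lin_indep_single[of "P' - P"] by (intro lin_span_in_subspaces) simp
  have l: "translate P U \<in> affine_kspaces 1" using U by (rule translate_in_affine_kspaces)
  have "P \<in> translate P U" using in_translate_self[OF lin_subspace_of_subspaces[OF U]] .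
  moreover have "P' \<in> translate P U"
    unfolding U_def mem_translate using in_lin_span[of 0 1 "\<lambda>_. P' - P"] by simp
  ultimately have "{m \<in> affine_kspaces 1. P \<in> m \<and> P' \<in> m} = {translate P U}"
    using l lines_eq_if_two_common_points[OF l _ _ _ _ _ assms] by blast
  then show ?thesis by simp
qed

lemma card_inter_lines:
  fixes l m :: "('n::finite \<Rightarrow> 'a::{field,finite}) set"
  assumes l: "l \<in> affine_kspaces 1" and m: "m \<in> affine_kspaces 1"
  shows "real (card (m \<inter> l))
       = (if m \<inter> l = {} then 0 else 1) + (if m = l then real CARD('a) - 1 else 0)"
proof (cases "m = l")
  case True
  then show ?thesis using card_affine_kspace[OF l] affine_kspace_nonempty[OF l] by simp
next
  case False
  then have "card (m \<inter> l) \<le> 1"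
    using lines_eq_if_two_common_points[OF l m] by (auto simp: card_le_Suc0_iff_eq)
  then show ?thesis using False by (cases "m \<inter> l = {}") (simp_all add: le_Suc_eq)
qed

lemma sum_degrees_on_line:
  fixes L :: "('n::finite \<Rightarrow> 'a::{field,finite}) set set"
  assumes L: "L \<subseteq> affine_kspaces 1" and l: "l \<in> affine_kspaces 1"
  shows "(\<Sum>P\<in>l. real (card {m \<in> L. P \<in> m}))
       = real (card L) - real (card {m \<in> L. m \<inter> l = {}})
         + (real CARD('a) - 1) * (if l \<in> L then 1 else 0)"
proof -
  have "(\<Sum>P\<in>l. real (card {m \<in> L. P \<in> m})) = (\<Sum>P\<in>l. \<Sum>m\<in>L. if P \<in> m then 1 else 0)"
    by (intro sum.cong refl) (simp add: sum_indicator_eq_card[of L "{m. _ \<in> m}", simplified] Int_def)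
  also have "\<dots> = (\<Sum>m\<in>L. \<Sum>P\<in>l. if P \<in> m then 1 else 0)" by (rule sum.swap)
  also have "\<dots> = (\<Sum>m\<in>L. real (card (m \<inter> l)))"
    by (intro sum.cong refl) (simp add: sum_indicator_eq_card Int_commute)
  also have "\<dots> = (\<Sum>m\<in>L. (if m \<inter> l = {} then 0 else 1) + (if m = l then real CARD('a) - 1 else 0))"
    using card_inter_lines[OF l] L by (intro sum.cong refl) blast
  also have "\<dots> = real (card {m \<in> L. m \<inter> l \<noteq> {}}) + (real CARD('a) - 1) * (if l \<in> L then 1 else 0)"
    by (simp add: sum.distrib sum.If_cases Int_def)
  also have "real (card {m \<in> L. m \<inter> l \<noteq> {}}) = real (card L) - real (card {m \<in> L. m \<inter> l = {}})"
  proof -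
    have "L = {m \<in> L. m \<inter> l \<noteq> {}} \<union> {m \<in> L. m \<inter> l = {}}" by blast
    then have "card L = card {m \<in> L. m \<inter> l \<noteq> {}} + card {m \<in> L. m \<inter> l = {}}"
      by (metis (no_types, lifting) card_Un_disjoint disjoint_iff finite mem_Collect_eq)
    then show ?thesis by simp
  qed
  finally show ?thesis .
qed

lemma degree_eq_weight:
  fixes L :: "('n::finite \<Rightarrow> 'a::{field,finite}) set set"
  assumes L: "L \<subseteq> affine_kspaces 1" and w: "cl_weight 1 L w"
  shows "real (card {m \<in> L. P \<in> m})
       = (real (card (subspaces 1 :: ('n \<Rightarrow> 'a) set set)) - 1) * w P + (\<Sum>Q\<in>UNIV. w Q)"
proof -
  let ?A = "{m \<in> affine_kspaces 1. P \<in> m} :: ('n \<Rightarrow> 'a) set set"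
  define r where "r = real (card (subspaces 1 :: ('n \<Rightarrow> 'a) set set))"
  have "{m \<in> L. P \<in> m} = ?A \<inter> L" using L by blast
  then have "real (card {m \<in> L. P \<in> m}) = (\<Sum>m\<in>?A. if m \<in> L then 1 else 0)"
    using sum_indicator_eq_card[of ?A L] by simp
  also have "\<dots> = (\<Sum>m\<in>?A. \<Sum>Q\<in>UNIV. if Q \<in> m then w Q else 0)"
    using w unfolding cl_weight_def by (intro sum.cong refl) (auto simp: sum.If_cases)
  also have "\<dots> = (\<Sum>Q\<in>UNIV. \<Sum>m\<in>?A. if Q \<in> m then w Q else 0)" by (rule sum.swap)
  also have "\<dots> = (\<Sum>Q\<in>UNIV. w Q * real (card {m \<in> affine_kspaces 1. P \<in> m \<and> Q \<in> m}))"
    by (intro sum.cong refl) (auto simp: sum.If_cases Int_def)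
  also have "\<dots> = (\<Sum>Q\<in>UNIV. w Q + (if Q = P then (r - 1) * w Q else 0))"
    using card_affine_kspaces_through[of 1 P] card_lines_through_two_points[of P]
    unfolding r_def by (intro sum.cong refl) (auto simp: algebra_simps)
  also have "\<dots> = (\<Sum>Q\<in>UNIV. w Q) + (r - 1) * w P" by (simp add: sum.distrib)
  finally show ?thesis unfolding r_def by simp
qed

lemma gauss_binom_1_shift:
  assumes "Q \<noteq> 1" "2 \<le> N"
  shows "Q ^ 2 * gauss_binom Q (N - 2) 1 + 1 = gauss_binom Q N 1 - Q"
proof -
  have "Q ^ N = Q ^ 2 * Q ^ (N - 2)" using assms(2) by (metis le_add_diff_inverse power_add)
  then show ?thesis using assms(1) by (simp add: gauss_binom_def field_simps power2_eq_square)
qed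

lemma card_skew_lines_if_cameron_liebler:
  fixes L :: "('n::finite \<Rightarrow> 'a::{field,finite}) set set"
  assumes L: "L \<subseteq> affine_kspaces 1"
    and card_L: "real (card L) = real x * gauss_binom (real CARD('a)) CARD('n) 1"
    and cl: "cameron_liebler 1 L" and l: "l \<in> affine_kspaces 1"
  shows "real (card {m \<in> L. m \<inter> l = {}})
       = (gauss_binom (real CARD('a)) CARD('n) 1 - real CARD('a)) * (real x - (if l \<in> L then 1 else 0))"
proof -
  define q where "q = real CARD('a)"
  define r where "r = gauss_binom q CARD('n) 1"
  define \<chi> where "\<chi> = (if l \<in> L then 1 else (0::real))"
  obtain w where w: "cl_weight 1 L w" using cl cameron_liebler_iff_cl_weight by blast
  have n: "1 \<le> CARD('n)" using finite_UNIV_card_ge_0[where 'a='n] by simp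
  have r: "real (card (subspaces 1 :: ('n \<Rightarrow> 'a) set set)) = r"
    using card_subspaces[OF n] unfolding r_def q_def .
  have "(\<Sum>P\<in>l. real (card {m \<in> L. P \<in> m})) = (\<Sum>P\<in>l. (r - 1) * w P + real x)"
    using degree_eq_weight[OF L w] total_weight[OF w L n card_L] r by simp
  also have "\<dots> = (r - 1) * (\<Sum>P\<in>l. w P) + q * real x"
    using card_affine_kspace[OF l] unfolding q_def by (simp add: sum.distrib sum_distrib_left)
  also have "(\<Sum>P\<in>l. w P) = \<chi>" using w l unfolding cl_weight_def \<chi>_def by simp
  finally show ?thesis
    using sum_degrees_on_line[OF L l] card_L unfolding q_def[symmetric] r_def[symmetric] \<chi>_def[symmetric]
    by (simp add: algebra_simps)
qed

lemma cameron_liebler_if_card_skew_lines: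
  fixes L :: "('n::finite \<Rightarrow> 'a::{field,finite}) set set"
  assumes L: "L \<subseteq> affine_kspaces 1" and n: "2 \<le> CARD('n)"
    and card_L: "real (card L) = real x * gauss_binom (real CARD('a)) CARD('n) 1"
    and skew: "\<And>l. l \<in> affine_kspaces 1 \<Longrightarrow> real (card {m \<in> L. m \<inter> l = {}})
       = (gauss_binom (real CARD('a)) CARD('n) 1 - real CARD('a)) * (real x - (if l \<in> L then 1 else 0))"
  shows "cameron_liebler 1 L"
proof -
  define q where "q = real CARD('a)"
  define r where "r = gauss_binom q CARD('n) 1"
  have q: "q \<ge> 2" using card_field_ge_2[where 'a='a] unfolding q_def by simp
  have "r - 1 \<noteq> 0"
  proof -
    have "q ^ CARD('n) \<ge> q ^ 2" using q n by (intro power_increasing) auto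
    moreover have "q ^ 2 > q" using q by (simp add: power2_eq_square)
    ultimately have "q ^ CARD('n) - 1 \<noteq> q - 1" by simp
    then show ?thesis using q unfolding r_def gauss_binom_def by (simp add: field_simps)
  qed
  show ?thesis
  proof (rule cameron_liebler_if_sums_affine[where F="\<lambda>P. real (card {m \<in> L. P \<in> m})"])
    fix l :: "('n \<Rightarrow> 'a) set" assume l: "l \<in> affine_kspaces 1"
    show "(\<Sum>P\<in>l. real (card {m \<in> L. P \<in> m})) = (r - 1) * (if l \<in> L then 1 else 0) + q * real x"
      using sum_degrees_on_line[OF L l] skew[OF l] card_L
      unfolding q_def[symmetric] r_def[symmetric] by (simp add: algebra_simps)
  qed fact
qed

lemma lines_with_direction:
  fixes v :: "'n \<Rightarrow> 'a::field"
  assumes "v \<noteq> (\<lambda>_. 0)"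
  shows "lin_span 1 (\<lambda>_. v) \<in> subspaces 1"
    and "{m \<in> L. \<exists>p. m = aff_span 1 p (\<lambda>_. v)} = L \<inter> parallel_class (lin_span 1 (\<lambda>_. v))"
  using assms lin_indep_single[of v]
  by (auto simp: lin_span_in_subspaces zero_fun_def parallel_class_def aff_span_eq_translate)

lemma cameron_liebler_lines_iff:
  fixes L :: "('n::finite \<Rightarrow> 'a::{field,finite}) set set"
  assumes L: "L \<subseteq> affine_kspaces 1" and n: "2 \<le> CARD('n)"
    and card_L: "real (card L) = real x * gauss_binom (real CARD('a)) CARD('n) 1"
  shows "cameron_liebler 1 L \<longleftrightarrow>
           (\<forall>l\<in>affine_kspaces 1.
              real (card {m\<in>L. m \<inter> l = {}}) =
                (real CARD('a) ^ 2 * gauss_binom (real CARD('a)) (CARD('n) - 2) 1 + 1)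
                * (real x - (if l \<in> L then 1 else 0)))
         \<and> (\<forall>v::'n \<Rightarrow> 'a. v \<noteq> (\<lambda>_. 0) \<longrightarrow> card {m\<in>L. \<exists>p. m = aff_span 1 p (\<lambda>_. v)} = x)"
    (is "_ \<longleftrightarrow> ?skew \<and> ?directions")
proof -
  have shift: "real CARD('a) ^ 2 * gauss_binom (real CARD('a)) (CARD('n) - 2) 1 + 1
      = gauss_binom (real CARD('a)) CARD('n) 1 - real CARD('a)"
    using gauss_binom_1_shift[of "real CARD('a)" "CARD('n)"] card_field_ge_2[where 'a='a] n by simp
  show ?thesis
  proof
    assume cl: "cameron_liebler 1 L"
    have "card {m\<in>L. \<exists>p. m = aff_span 1 p (\<lambda>_. v)} = x" if "v \<noteq> (\<lambda>_. 0)" for v :: "'n \<Rightarrow> 'a"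
    proof -
      have "spread 1 (parallel_class (lin_span 1 (\<lambda>_. v)))"
        using spread_parallel_class lines_with_direction(1)[OF that] by blast
      then show ?thesis
        using lines_with_direction(2)[OF that] cameron_liebler_imp_card_inter_spread[OF cl L _ card_L] n
        by simp
    qed
    then show "?skew \<and> ?directions"
      using card_skew_lines_if_cameron_liebler[OF L card_L cl] unfolding shift by simp
  next
    assume "?skew \<and> ?directions"
    then show "cameron_liebler 1 L"
      using cameron_liebler_if_card_skew_lines[OF L n card_L] unfolding shift by blast
  qed
qed

theorem theorem3p7:
  fixes L :: "('n::finite \<Rightarrow> 'a::{field,finite}) set set" and k x :: nat
  assumes "k \<ge> 1" and "CARD('n) \<ge> 2 * k + 1"
    and "L \<subseteq> affine_kspaces k" and "x > 0"
    and "real (card L) = real x * gauss_binom (real CARD('a)) CARD('n) k"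
  shows "(cameron_liebler k L \<longleftrightarrow> (\<forall>S. spread k S \<longrightarrow> card (L \<inter> S) = x))
       \<and> (cameron_liebler k L \<longleftrightarrow>
            (\<forall>R R'. conj_switching k R R' \<longrightarrow> card (L \<inter> R) = card (L \<inter> R')))
       \<and> (k = 1 \<longrightarrow>
            (cameron_liebler k L \<longleftrightarrow>
              ((\<forall>l\<in>affine_kspaces 1.
                  real (card {m\<in>L. m \<inter> l = {}}) =
                    (real CARD('a) ^ 2 * gauss_binom (real CARD('a)) (CARD('n) - 2) 1 + 1)
                    * (real x - (if l \<in> L then 1 else 0)))
               \<and> (\<forall>v::'n \<Rightarrow> 'a. v \<noteq> (\<lambda>_. 0) \<longrightarrow>
                    card {m\<in>L. \<exists>p. m = aff_span 1 p (\<lambda>_. v)} = x))))"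
proof -
  have kn: "k + 2 \<le> CARD('n)" "k \<le> CARD('n)" using assms(1,2) by auto
  have spreads: "cameron_liebler k L \<longleftrightarrow> (\<forall>S. spread k S \<longrightarrow> card (L \<inter> S) = x)"
    using cameron_liebler_imp_card_inter_spread[OF _ assms(3) kn(2) assms(5)]
      cameron_liebler_if_spreads[OF kn(1)] by blast
  have switching:
    "cameron_liebler k L \<longleftrightarrow> (\<forall>R R'. conj_switching k R R' \<longrightarrow> card (L \<inter> R) = card (L \<inter> R'))"
    using cameron_liebler_imp_card_inter_switching cameron_liebler_if_switching[OF kn(1)] by blast
  show ?thesis
  proof (cases "k = 1")
    case True
    have "2 \<le> CARD('n)" using kn True by simp
    note lines = cameron_liebler_lines_iff[OF assms(3)[unfolded True] this assms(5)[unfolded True]]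
    show ?thesis unfolding True using spreads[unfolded True] switching[unfolded True] lines by blast
  qed (use spreads switching in blast)
qed

end
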